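(* Let $L$ be a finite geometric lattice equipped with a sheaf $F$ and let $f:\widetilde L\to L$ be its Boolean cover. Then for any atom $a\in L$ there is a long exact sequence $$\cdots\to\mathrm{HC}_i(\widetilde{L^a};F)\to\mathrm{HC}_i(\widetilde{L_a};F)\to\mathrm{HC}_i(\widetilde L;F)\to\mathrm{HC}_{i-1}(\widetilde{L^a};F)\to\mathrm{HC}_{i-1}(\widetilde{L_a};F)\to\cdots$$
   Context: A finite lattice $L$ with minimum $\mathbf{0}$ is graded by a rank function $rk$ with $rk(\mathbf{0})=0$; its atoms are the rank-$1$ elements; it is atomic if every element is a join of atoms (the empty join being $\mathbf{0}$); it is geometric if it is graded and atomic and $rk(x\vee y)+rk(x\wedge y)\le rk(x)+rk(y)$ for all $x,y$. A sheaf $F$ on a poset assigns an $R$-module $F(x)$ ($R$ a commutative ring with $1$) to each element and a map $F^y_x:F(y)\to F(x)$ to each $x\le y$, functorially (a contravariant functor). For an atom $a$ of $L$: the deletion $L_a$ is the subposet of elements of $L$ expressible as joins of atoms other than $a$ (a graded atomic lattice whose atoms are the atoms of $L$ other than $a$); the restriction $L^a$ is the interval $\{x\in L:x\ge a\}$ (a graded atomic lattice with minimum $a$ whose atoms are the elements covering $a$). Both carry the restriction of $F$. Boolean cover of a graded atomic lattice $M$ with atoms $A_M$ and sheaf $G$: $\widetilde M$ is the lattice of all subsets of $A_M$ ordered by inclusion, with $f:\widetilde M\to M$ sending $S$ to the join of $S$ in $M$ (with $\varnothing\mapsto$ the minimum of $M$); the induced sheaf, still written $G$, is $G(S)=G(f(S))$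 with structure maps $G^{f(T)}_{f(S)}$. Cellular homology: for the Boolean lattice $B$ of subsets of a finite set $\{a_1,\dots,a_n\}$ with sheaf $G$, $C_k(B;G)=\bigoplus_{|x|=k}G(x)$ with differential $\sum\varepsilon^x_yG^x_y$ over pairs $y\subset x$, $|y|=|x|-1$, where $\varepsilon^x_y=(-1)^{j-1}$ if $x=\{a_{i_1},\dots,a_{i_k}\}$ ($i_1<\cdots<i_k$) and $y=x\setminus\{a_{i_j}\}$; $\mathrm{HC}_*(B;G)$ denotes its homology. *)

theory Defs
  imports Complex_Main
begin

definition lub_in :: "'a::order set \<Rightarrow> 'a set \<Rightarrow> 'a \<Rightarrow> bool" where
  "lub_in M S x \<longleftrightarrow> x \<in> M \<and> (\<forall>s\<in>S. s \<le> x) \<and> (\<forall>y\<in>M. (\<forall>s\<in>S. s \<le> y) \<longrightarrow> x \<le> y)"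

definition glb_in :: "'a::order set \<Rightarrow> 'a set \<Rightarrow> 'a \<Rightarrow> bool" where
  "glb_in M S x \<longleftrightarrow> x \<in> M \<and> (\<forall>s\<in>S. x \<le> s) \<and> (\<forall>y\<in>M. (\<forall>s\<in>S. y \<le> s) \<longrightarrow> y \<le> x)"

text \<open>Join of a set S in the poset M (join of the empty set = minimum of M).\<close>
definition bjoin :: "'a::order set \<Rightarrow> 'a set \<Rightarrow> 'a" where
  "bjoin M S = (THE x. lub_in M S x)"

definition bmeet :: "'a::order set \<Rightarrow> 'a set \<Rightarrow> 'a" where
  "bmeet M S = (THE x. glb_in M S x)"

definition lattice_on :: "'a::order set \<Rightarrow> bool" where
  "lattice_on L \<longleftrightarrow> finite L \<and> L \<noteq> {} \<and>
     (\<forall>x\<in>L. \<forall>y\<in>L. (\<exists>z. lub_in L {x, y} z) \<and> (\<exists>z. glb_in L {x, y} z))"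

definition covers_in :: "'a::order set \<Rightarrow> 'a \<Rightarrow> 'a \<Rightarrow> bool" where
  "covers_in M x y \<longleftrightarrow> x \<in> M \<and> y \<in> M \<and> x < y \<and> \<not> (\<exists>z\<in>M. x < z \<and> z < y)"

definition atoms :: "'a::order set \<Rightarrow> 'a set" where
  "atoms M = {x \<in> M. covers_in M (bjoin M {}) x}"

definition geometric_lattice :: "'a::order set \<Rightarrow> bool" where
  "geometric_lattice L \<longleftrightarrow> lattice_on L \<and>
     (\<exists>rk :: 'a \<Rightarrow> nat.
        rk (bjoin L {}) = 0 \<and>
        (\<forall>x y. covers_in L x y \<longrightarrow> rk y = rk x + 1) \<and>
        (\<forall>x\<in>L. \<forall>y\<in>L. rk (bjoin L {x, y}) + rk (bmeet L {x, y}) \<le> rk x + rk y)) \<and>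
     (\<forall>x\<in>L. \<exists>S\<subseteq>atoms L. lub_in L S x)"

definition deletion :: "'a::order set \<Rightarrow> 'a \<Rightarrow> 'a set" where
  "deletion L a = {x \<in> L. \<exists>S \<subseteq> atoms L - {a}. lub_in L S x}"

definition restriction :: "'a::order set \<Rightarrow> 'a \<Rightarrow> 'a set" where
  "restriction L a = {x \<in> L. a \<le> x}"

section \<open>Sheaves of R-modules (all F(x) submodules of one ambient R-module)\<close>

definition sheaf_on :: "('r::comm_ring_1 \<Rightarrow> 'm::ab_group_add \<Rightarrow> 'm) \<Rightarrow> 'a::order set
    \<Rightarrow> ('a \<Rightarrow> 'm set) \<Rightarrow> ('a \<Rightarrow> 'a \<Rightarrow> 'm \<Rightarrow> 'm) \<Rightarrow> bool" where
  "sheaf_on scale L F Fr \<longleftrightarrow>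
     (\<forall>x\<in>L. 0 \<in> F x \<and> (\<forall>v\<in>F x. \<forall>w\<in>F x. v + w \<in> F x) \<and> (\<forall>c. \<forall>v\<in>F x. scale c v \<in> F x)) \<and>
     (\<forall>x\<in>L. \<forall>y\<in>L. x \<le> y \<longrightarrow>
        (\<forall>v\<in>F y. Fr y x v \<in> F x) \<and>
        (\<forall>v\<in>F y. \<forall>w\<in>F y. Fr y x (v + w) = Fr y x v + Fr y x w) \<and>
        (\<forall>c. \<forall>v\<in>F y. Fr y x (scale c v) = scale c (Fr y x v))) \<and>
     (\<forall>x\<in>L. \<forall>v\<in>F x. Fr x x v = v) \<and>
     (\<forall>x\<in>L. \<forall>y\<in>L. \<forall>z\<in>L. x \<le> y \<and> y \<le> z \<longrightarrow> (\<forall>v\<in>F z. Fr y x (Fr z y v) = Fr z x v))"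

text \<open>Chains of degree k on the Boolean cover of M: functions on subsets of the atoms,
  supported on k-element subsets S, with value in F(join of S).\<close>
definition chains :: "'a::order set \<Rightarrow> ('a \<Rightarrow> 'm::ab_group_add set) \<Rightarrow> int \<Rightarrow> ('a set \<Rightarrow> 'm) set" where
  "chains M F k = {c. (\<forall>S. S \<subseteq> atoms M \<and> int (card S) = k \<longrightarrow> c S \<in> F (bjoin M S)) \<and>
                      (\<forall>S. \<not> (S \<subseteq> atoms M \<and> int (card S) = k) \<longrightarrow> c S = 0)}"

text \<open>Sign: removing b from x = insert b S, b at position j, gives (-1)^(j-1),
  with j - 1 = number of elements of S below b in the labelling num.\<close>
definition sgn_term :: "('a \<Rightarrow> nat) \<Rightarrow> 'a set \<Rightarrow> 'a \<Rightarrow> 'm::ab_group_add \<Rightarrow> 'm" where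
  "sgn_term num S b v = (if even (card {s \<in> S. num s < num b}) then v else - v)"

definition bd :: "'a::order set \<Rightarrow> ('a \<Rightarrow> 'a \<Rightarrow> 'm \<Rightarrow> 'm) \<Rightarrow> ('a \<Rightarrow> nat) \<Rightarrow> int
    \<Rightarrow> ('a set \<Rightarrow> 'm::ab_group_add) \<Rightarrow> ('a set \<Rightarrow> 'm)" where
  "bd M Fr num k c = (\<lambda>S. if S \<subseteq> atoms M \<and> int (card S) = k - 1
      then (\<Sum>b\<in>atoms M - S. sgn_term num S b (Fr (bjoin M (insert b S)) (bjoin M S) (c (insert b S))))
      else 0)"

definition cycles where
  "cycles M F Fr num k = {c \<in> chains M F k. bd M Fr num k c = (\<lambda>S. 0)}"

definition boundaries where
  "boundaries M F Fr num k = bd M Fr num (k + 1) ` chains M F (k + 1)"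

definition HC where
  "HC M F Fr num k = (\<lambda>z. (\<lambda>b. (\<lambda>S. z S + b S)) ` boundaries M F Fr num k) ` cycles M F Fr num k"

text \<open>Module operations on cosets (B = the subgroup of boundaries).\<close>
definition cadd :: "('b \<Rightarrow> 'm::ab_group_add) set \<Rightarrow> ('b \<Rightarrow> 'm) set \<Rightarrow> ('b \<Rightarrow> 'm) set" where
  "cadd X Y = {(\<lambda>S. x S + y S) | x y. x \<in> X \<and> y \<in> Y}"

definition csmul :: "('r \<Rightarrow> 'm::ab_group_add \<Rightarrow> 'm) \<Rightarrow> ('b \<Rightarrow> 'm) set \<Rightarrow> 'r \<Rightarrow> ('b \<Rightarrow> 'm) set \<Rightarrow> ('b \<Rightarrow> 'm) set" where
  "csmul scale B c X = {(\<lambda>S. scale c (x S) + b S) | x b. x \<in> X \<and> b \<in> B}"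

definition hom_lin where
  "hom_lin scale B1 H1 B2 H2 \<phi> \<longleftrightarrow>
     (\<forall>X\<in>H1. \<phi> X \<in> H2) \<and>
     (\<forall>X\<in>H1. \<forall>Y\<in>H1. \<phi> (cadd X Y) = cadd (\<phi> X) (\<phi> Y)) \<and>
     (\<forall>c. \<forall>X\<in>H1. \<phi> (csmul scale B1 c X) = csmul scale B2 c (\<phi> X))"

text \<open>Exactness at H2 of H1 --phi--> H2 --psi--> H3; the zero of H3 is the coset B3.\<close>
definition exact_at where
  "exact_at H1 \<phi> H2 \<psi> B3 \<longleftrightarrow> \<phi> ` H1 = {Y \<in> H2. \<psi> Y = B3}"

end

theory Submission
  imports Defs "HOL-Library.Function_Algebras"
begin

text \<open>The chain complex of the Boolean cover of \<open>L\<close> has a face for every set of atoms, carrying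
  the stalk of \<open>F\<close> at its join. For an atom \<open>a\<close> the faces avoiding \<open>a\<close> form a subcomplex,
  which is the complex of the deletion \<open>L\<^sub>a\<close> because joins of atoms other than \<open>a\<close> are the
  same in \<open>L\<^sub>a\<close> and in \<open>L\<close>. The quotient is, up to a shift of degree, the link of \<open>a\<close>: the
  complex on the other atoms whose face \<open>T\<close> carries the stalk at \<open>a \<or> \<Or>T\<close>. The long exact
  homology sequence of this short exact sequence is the claimed one, once the homology of the link
  is identified with that of the restriction \<open>L\<^sup>a\<close>, whose atoms are the elements covering \<open>a\<close>.

  For this, both complexes are included into the complex, with the same stalks, on the other atoms
  together with the covers of \<open>a\<close>. In a geometric lattice the covers of \<open>a\<close> are exactly the
  joins \<open>a \<or> b\<close> with \<open>b\<close> an atom, so each extra generator \<open>x\<close> has a partner \<open>y\<close> in the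
  subcomplex whose addition to a face containing \<open>x\<close> does not change the stalk. Coning off from
  \<open>y\<close> is then a chain homotopy showing that deleting \<open>x\<close> does not change homology.\<close>

section \<open>Homology of chain complexes of functions\<close>

definition scale_fun :: "('r \<Rightarrow> 'm \<Rightarrow> 'm) \<Rightarrow> 'r \<Rightarrow> ('b \<Rightarrow> 'm) \<Rightarrow> ('b \<Rightarrow> 'm)" where
  "scale_fun scale r x = (\<lambda>S. scale r (x S))"

definition coset_rep :: "'c set \<Rightarrow> 'c" where
  "coset_rep X = (SOME z. z \<in> X)"

lemma cadd_conv: "cadd X Y = {x + y | x y. x \<in> X \<and> y \<in> Y}"
  by (simp add: cadd_def plus_fun_def)

lemma csmul_conv: "csmul scale B c X = {scale_fun scale c x + b | x b. x \<in> X \<and> b \<in> B}"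
  by (simp add: csmul_def plus_fun_def scale_fun_def)

lemma hom_lin_comp:
  "hom_lin scale B1 H1 B2 H2 \<phi> \<Longrightarrow> hom_lin scale B2 H2 B3 H3 \<psi> \<Longrightarrow> hom_lin scale B1 H1 B3 H3 (\<psi> \<circ> \<phi>)"
  by (simp add: hom_lin_def)

definition lin_iso where
  "lin_iso scale B1 H1 B2 H2 \<phi> \<longleftrightarrow> hom_lin scale B1 H1 B2 H2 \<phi> \<and> bij_betw \<phi> H1 H2 \<and> \<phi> B1 = B2"

lemma lin_iso_comp:
  "lin_iso scale B1 H1 B2 H2 \<phi> \<Longrightarrow> lin_iso scale B2 H2 B3 H3 \<psi> \<Longrightarrow> lin_iso scale B1 H1 B3 H3 (\<psi> \<circ> \<phi>)"
  by (auto simp: lin_iso_def hom_lin_comp bij_betw_trans)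

definition long_exact where
  "long_exact scale B1 H1 B2 H2 B3 H3 \<alpha> \<beta> \<delta> \<longleftrightarrow> (\<forall>i::int.
     hom_lin scale (B1 i) (H1 i) (B2 i) (H2 i) (\<alpha> i) \<and>
     hom_lin scale (B2 i) (H2 i) (B3 i) (H3 i) (\<beta> i) \<and>
     hom_lin scale (B3 i) (H3 i) (B1 (i - 1)) (H1 (i - 1)) (\<delta> i) \<and>
     exact_at (H1 i) (\<alpha> i) (H2 i) (\<beta> i) (B3 i) \<and>
     exact_at (H2 i) (\<beta> i) (H3 i) (\<delta> i) (B1 (i - 1)) \<and>
     exact_at (H3 i) (\<delta> i) (H1 (i - 1)) (\<alpha> (i - 1)) (B2 (i - 1)))"

locale chain_complex =
  fixes scale :: "'r::comm_ring_1 \<Rightarrow> 'm::ab_group_add \<Rightarrow> 'm"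
    and Ch :: "int \<Rightarrow> ('b \<Rightarrow> 'm) set" and D :: "int \<Rightarrow> ('b \<Rightarrow> 'm) \<Rightarrow> ('b \<Rightarrow> 'm)"
  assumes module: "module scale"
    and zero_in_Ch: "0 \<in> Ch k"
    and add_in_Ch: "x \<in> Ch k \<Longrightarrow> y \<in> Ch k \<Longrightarrow> x + y \<in> Ch k"
    and uminus_in_Ch: "x \<in> Ch k \<Longrightarrow> - x \<in> Ch k"
    and scale_in_Ch: "x \<in> Ch k \<Longrightarrow> scale_fun scale r x \<in> Ch k"
    and D_in_Ch: "x \<in> Ch k \<Longrightarrow> D k x \<in> Ch (k - 1)"
    and D_add: "x \<in> Ch k \<Longrightarrow> y \<in> Ch k \<Longrightarrow> D k (x + y) = D k x + D k y"
    and D_scale: "x \<in> Ch k \<Longrightarrow> D k (scale_fun scale r x) = scale_fun scale r (D k x)"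
    and D_D: "x \<in> Ch k \<Longrightarrow> D (k - 1) (D k x) = 0"
begin

definition cyc where "cyc k = {x \<in> Ch k. D k x = 0}"
definition bnd where "bnd k = D (k + 1) ` Ch (k + 1)"
definition cls where "cls k z = (\<lambda>b. z + b) ` bnd k"
definition homology where "homology k = cls k ` cyc k"

lemma scale_fun_add: "scale_fun scale r (x + y) = scale_fun scale r x + scale_fun scale r y"
  using module.scale_right_distrib[OF module] by (auto simp: scale_fun_def plus_fun_def)

lemma scale_fun_zero_right: "scale_fun scale r 0 = 0"
  using module.scale_zero_right[OF module] by (auto simp: scale_fun_def)

lemma diff_in_Ch: "x \<in> Ch k \<Longrightarrow> y \<in> Ch k \<Longrightarrow> x - y \<in> Ch k"
  using add_in_Ch uminus_in_Ch by (metis diff_conv_add_uminus)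

lemma D_zero: "D k 0 = 0"
  using D_add[OF zero_in_Ch zero_in_Ch, of k] by simp

lemma D_uminus: "x \<in> Ch k \<Longrightarrow> D k (- x) = - D k x"
proof -
  assume x: "x \<in> Ch k"
  have "D k x + D k (- x) = 0" using D_add[OF x uminus_in_Ch[OF x]] D_zero by simp
  then show ?thesis by (metis neg_eq_iff_add_eq_0)
qed

lemma D_diff: "x \<in> Ch k \<Longrightarrow> y \<in> Ch k \<Longrightarrow> D k (x - y) = D k x - D k y"
  using D_add[OF _ uminus_in_Ch, of x k y] D_uminus[of y k] by simp

lemma D_in_Ch_succ: "x \<in> Ch (k + 1) \<Longrightarrow> D (k + 1) x \<in> Ch k"
  using D_in_Ch[of x "k + 1"] by simp

lemma D_D_succ: "x \<in> Ch (k + 1) \<Longrightarrow> D k (D (k + 1) x) = 0"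
  using D_D[of x "k + 1"] by simp

lemma cyc_subset_Ch: "cyc k \<subseteq> Ch k"
  by (auto simp: cyc_def)

lemma bnd_subset_cyc: "bnd k \<subseteq> cyc k"
  by (auto simp: bnd_def cyc_def D_in_Ch_succ D_D_succ)

lemma zero_in_bnd: "0 \<in> bnd k"
  unfolding bnd_def using D_zero zero_in_Ch by (metis image_eqI)

lemma add_in_bnd: "x \<in> bnd k \<Longrightarrow> y \<in> bnd k \<Longrightarrow> x + y \<in> bnd k"
  unfolding bnd_def by (auto simp: D_add[symmetric] intro!: imageI add_in_Ch)

lemma uminus_in_bnd: "x \<in> bnd k \<Longrightarrow> - x \<in> bnd k"
  unfolding bnd_def by (auto simp: D_uminus[symmetric] intro!: imageI uminus_in_Ch)

lemma scale_in_bnd: "x \<in> bnd k \<Longrightarrow> scale_fun scale r x \<in> bnd k"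
  unfolding bnd_def by (auto simp: D_scale[symmetric] intro!: imageI scale_in_Ch)

lemma zero_in_cyc: "0 \<in> cyc k"
  by (auto simp: cyc_def zero_in_Ch D_zero)

lemma add_in_cyc: "x \<in> cyc k \<Longrightarrow> y \<in> cyc k \<Longrightarrow> x + y \<in> cyc k"
  by (auto simp: cyc_def D_add add_in_Ch)

lemma diff_in_cyc: "x \<in> cyc k \<Longrightarrow> y \<in> cyc k \<Longrightarrow> x - y \<in> cyc k"
  by (auto simp: cyc_def D_diff diff_in_Ch)

lemma scale_in_cyc: "x \<in> cyc k \<Longrightarrow> scale_fun scale r x \<in> cyc k"
  by (auto simp: cyc_def D_scale scale_in_Ch scale_fun_zero_right)

lemma cls_eqI: "x - y \<in> bnd k \<Longrightarrow> cls k x = cls k y"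
proof -
  have sub: "cls k x \<subseteq> cls k y" if "x - y \<in> bnd k" for x y
  proof
    fix u assume "u \<in> cls k x"
    then obtain b where b: "b \<in> bnd k" "u = x + b" by (auto simp: cls_def)
    then have "u = y + ((x - y) + b)" by simp
    moreover have "(x - y) + b \<in> bnd k" using add_in_bnd that b by simp
    ultimately show "u \<in> cls k y" unfolding cls_def by (rule image_eqI)
  qed
  assume "x - y \<in> bnd k"
  moreover have "y - x \<in> bnd k" using uminus_in_bnd[OF \<open>x - y \<in> bnd k\<close>] by simp
  ultimately show ?thesis using sub by blast
qed

lemma in_cls: "x \<in> cls k x"
  unfolding cls_def using zero_in_bnd by (metis add.right_neutral image_eqI)

lemma cls_eq_iff: "cls k x = cls k y \<longleftrightarrow> x - y \<in> bnd k"
proof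
  assume "cls k x = cls k y"
  then have "x \<in> cls k y" using in_cls by metis
  then show "x - y \<in> bnd k" by (auto simp: cls_def)
qed (rule cls_eqI)

lemma cls_zero: "cls k 0 = bnd k"
  by (auto simp: cls_def)

lemma cls_eq_zero_iff: "cls k x = bnd k \<longleftrightarrow> x \<in> bnd k"
  using cls_eq_iff[of k x 0] by (simp add: cls_zero)

lemma coset_rep_cls: "coset_rep (cls k z) - z \<in> bnd k"
proof -
  have "coset_rep (cls k z) \<in> cls k z" unfolding coset_rep_def using in_cls by (metis someI)
  then show ?thesis by (auto simp: cls_def)
qed

lemma cls_in_homology: "z \<in> cyc k \<Longrightarrow> cls k z \<in> homology k"
  by (auto simp: homology_def)

lemma bnd_in_homology: "bnd k \<in> homology k"
  using cls_in_homology[OF zero_in_cyc] cls_zero by simp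

lemma cadd_cls: "cadd (cls k x) (cls k y) = cls k (x + y)"
proof (intro set_eqI iffI)
  fix u assume "u \<in> cadd (cls k x) (cls k y)"
  then obtain b b' where "b \<in> bnd k" "b' \<in> bnd k" "u = (x + b) + (y + b')"
    by (auto simp: cadd_conv cls_def)
  then show "u \<in> cls k (x + y)" unfolding cls_def
    by (intro image_eqI[of _ _ "b + b'"]) (auto simp: algebra_simps add_in_bnd)
next
  fix u assume "u \<in> cls k (x + y)"
  then obtain b where "b \<in> bnd k" "u = (x + b) + (y + 0)" by (auto simp: cls_def algebra_simps)
  then show "u \<in> cadd (cls k x) (cls k y)" unfolding cadd_conv cls_def using zero_in_bnd by blast
qed

lemma csmul_cls: "csmul scale (bnd k) r (cls k x) = cls k (scale_fun scale r x)"
proof (intro set_eqI iffI)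
  fix u assume "u \<in> csmul scale (bnd k) r (cls k x)"
  then obtain b b' where "b \<in> bnd k" "b' \<in> bnd k" "u = scale_fun scale r (x + b) + b'"
    by (auto simp: csmul_conv cls_def)
  then show "u \<in> cls k (scale_fun scale r x)" unfolding cls_def
    by (intro image_eqI[of _ _ "scale_fun scale r b + b'"])
       (auto simp: algebra_simps add_in_bnd scale_in_bnd scale_fun_add)
next
  fix u assume "u \<in> cls k (scale_fun scale r x)"
  then obtain b where "b \<in> bnd k" "u = scale_fun scale r (x + 0) + b" by (auto simp: cls_def)
  then show "u \<in> csmul scale (bnd k) r (cls k x)" unfolding csmul_conv cls_def using zero_in_bnd by blast
qed

lemma cadd_in_homology: "X \<in> homology k \<Longrightarrow> Y \<in> homology k \<Longrightarrow> cadd X Y \<in> homology k"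
  by (auto simp: homology_def cadd_cls add_in_cyc)

lemma csmul_in_homology: "X \<in> homology k \<Longrightarrow> csmul scale (bnd k) r X \<in> homology k"
  by (auto simp: homology_def csmul_cls scale_in_cyc)

lemma hom_lin_inv_into:
  assumes h: "hom_lin scale (bnd k) (homology k) B2 H2 \<phi>" and b: "bij_betw \<phi> (homology k) H2"
  shows "hom_lin scale B2 H2 (bnd k) (homology k) (inv_into (homology k) \<phi>)"
proof -
  let ?\<psi> = "inv_into (homology k) \<phi>"
  have \<phi>_add: "\<phi> (cadd X X') = cadd (\<phi> X) (\<phi> X')" if "X \<in> homology k" "X' \<in> homology k" for X X'
    using h that by (simp add: hom_lin_def)
  have \<phi>_smul: "\<phi> (csmul scale (bnd k) r X) = csmul scale B2 r (\<phi> X)" if "X \<in> homology k" for r X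
    using h that by (simp add: hom_lin_def)
  have \<psi>_in: "?\<psi> Y \<in> homology k" and \<phi>\<psi>: "\<phi> (?\<psi> Y) = Y" if "Y \<in> H2" for Y
    using that b by (auto simp: bij_betw_def intro: inv_into_into f_inv_into_f)
  have \<psi>_eq: "?\<psi> (\<phi> X) = X" if "X \<in> homology k" for X
    using that b by (simp add: bij_betw_def)
  show ?thesis
    unfolding hom_lin_def
  proof (intro conjI ballI allI)
    fix Y assume "Y \<in> H2" then show "?\<psi> Y \<in> homology k" by (rule \<psi>_in)
  next
    fix Y Y' assume Y: "Y \<in> H2" "Y' \<in> H2"
    have "cadd Y Y' = \<phi> (cadd (?\<psi> Y) (?\<psi> Y'))"
      using \<phi>_add[OF \<psi>_in[OF Y(1)] \<psi>_in[OF Y(2)]] \<phi>\<psi>[OF Y(1)] \<phi>\<psi>[OF Y(2)] by simp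
    then show "?\<psi> (cadd Y Y') = cadd (?\<psi> Y) (?\<psi> Y')"
      using \<psi>_eq[OF cadd_in_homology[OF \<psi>_in[OF Y(1)] \<psi>_in[OF Y(2)]]] by simp
  next
    fix r Y assume Y: "Y \<in> H2"
    have "csmul scale B2 r Y = \<phi> (csmul scale (bnd k) r (?\<psi> Y))"
      using \<phi>_smul[OF \<psi>_in[OF Y]] \<phi>\<psi>[OF Y] by simp
    then show "?\<psi> (csmul scale B2 r Y) = csmul scale (bnd k) r (?\<psi> Y)"
      using \<psi>_eq[OF csmul_in_homology[OF \<psi>_in[OF Y]]] by simp
  qed
qed

lemma lin_iso_inv_into:
  assumes "lin_iso scale (bnd k) (homology k) B2 H2 \<phi>"
  shows "lin_iso scale B2 H2 (bnd k) (homology k) (inv_into (homology k) \<phi>)"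
proof -
  have h: "hom_lin scale (bnd k) (homology k) B2 H2 \<phi>" and b: "bij_betw \<phi> (homology k) H2"
    and z: "\<phi> (bnd k) = B2" using assms by (simp_all add: lin_iso_def)
  have "inv_into (homology k) \<phi> B2 = bnd k"
    using b z bnd_in_homology by (metis bij_betw_def inv_into_f_f)
  then show ?thesis using hom_lin_inv_into[OF h b] bij_betw_inv_into[OF b] by (simp add: lin_iso_def)
qed

end

definition induced_map :: "('c \<Rightarrow> 'd set) \<Rightarrow> ('c \<Rightarrow> 'c) \<Rightarrow> 'c set \<Rightarrow> 'd set" where
  "induced_map cls' g X = cls' (g (coset_rep X))"

lemma induced_map:
  assumes c1: "chain_complex scale Ch1 D1" and c2: "chain_complex scale Ch2 D2"
    and g_cyc: "\<And>x. x \<in> chain_complex.cyc Ch1 D1 k \<Longrightarrow> g x \<in> chain_complex.cyc Ch2 D2 k'"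
    and g_add: "\<And>x y. x \<in> chain_complex.cyc Ch1 D1 k \<Longrightarrow> y \<in> chain_complex.cyc Ch1 D1 k \<Longrightarrow>
      g (x + y) = g x + g y"
    and g_scale: "\<And>x r. x \<in> chain_complex.cyc Ch1 D1 k \<Longrightarrow> g (scale_fun scale r x) = scale_fun scale r (g x)"
    and g_bnd: "\<And>x. x \<in> chain_complex.bnd Ch1 D1 k \<Longrightarrow> g x \<in> chain_complex.bnd Ch2 D2 k'"
  shows induced_map_cls: "\<And>z. z \<in> chain_complex.cyc Ch1 D1 k \<Longrightarrow>
      induced_map (chain_complex.cls Ch2 D2 k') g (chain_complex.cls Ch1 D1 k z) = chain_complex.cls Ch2 D2 k' (g z)"
    and hom_lin_induced_map: "hom_lin scale (chain_complex.bnd Ch1 D1 k) (chain_complex.homology Ch1 D1 k)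
      (chain_complex.bnd Ch2 D2 k') (chain_complex.homology Ch2 D2 k') (induced_map (chain_complex.cls Ch2 D2 k') g)"
proof -
  interpret A: chain_complex scale Ch1 D1 by (rule c1)
  interpret B: chain_complex scale Ch2 D2 by (rule c2)
  show ev: "induced_map (B.cls k') g (A.cls k z) = B.cls k' (g z)" if z: "z \<in> A.cyc k" for z
  proof -
    have d: "coset_rep (A.cls k z) - z \<in> A.bnd k" by (rule A.coset_rep_cls)
    then have "g (coset_rep (A.cls k z)) = g z + g (coset_rep (A.cls k z) - z)"
      using g_add[OF z, of "coset_rep (A.cls k z) - z"] A.bnd_subset_cyc by auto
    then have "g (coset_rep (A.cls k z)) - g z \<in> B.bnd k'" using g_bnd[OF d] by simp
    then show ?thesis unfolding induced_map_def by (rule B.cls_eqI)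
  qed
  show "hom_lin scale (A.bnd k) (A.homology k) (B.bnd k') (B.homology k') (induced_map (B.cls k') g)"
    unfolding hom_lin_def
  proof (intro conjI ballI allI)
    fix X assume "X \<in> A.homology k"
    then obtain z where "z \<in> A.cyc k" "X = A.cls k z" by (auto simp: A.homology_def)
    then show "induced_map (B.cls k') g X \<in> B.homology k'" using ev g_cyc B.cls_in_homology by simp
  next
    fix X Y assume "X \<in> A.homology k" "Y \<in> A.homology k"
    then obtain z w where "z \<in> A.cyc k" "X = A.cls k z" "w \<in> A.cyc k" "Y = A.cls k w"
      by (auto simp: A.homology_def)
    then show "induced_map (B.cls k') g (cadd X Y) =
        cadd (induced_map (B.cls k') g X) (induced_map (B.cls k') g Y)"
      using ev A.cadd_cls B.cadd_cls A.add_in_cyc g_add by simp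
  next
    fix r X assume "X \<in> A.homology k"
    then obtain z where "z \<in> A.cyc k" "X = A.cls k z" by (auto simp: A.homology_def)
    then show "induced_map (B.cls k') g (csmul scale (A.bnd k) r X) =
        csmul scale (B.bnd k') r (induced_map (B.cls k') g X)"
      using ev A.csmul_cls B.csmul_cls A.scale_in_cyc g_scale by simp
  qed
qed

lemma image_inv_into_Collect:
  assumes "bij_betw f A B"
  shows "inv_into A f ` {y \<in> B. P y} = {x \<in> A. P (f x)}"
proof (intro set_eqI iffI)
  fix x assume "x \<in> inv_into A f ` {y \<in> B. P y}"
  then obtain y where "y \<in> B" "P y" "x = inv_into A f y" by blast
  then show "x \<in> {x \<in> A. P (f x)}"
    using assms by (auto simp: bij_betw_def intro: inv_into_into f_inv_into_f)
next
  fix x assume "x \<in> {x \<in> A. P (f x)}"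
  then show "x \<in> inv_into A f ` {y \<in> B. P y}"
    using assms by (auto simp: bij_betw_def intro!: image_eqI[of _ _ "f x"])
qed

context chain_complex
begin

lemma long_exact_transport:
  assumes les: "long_exact scale B1 H1 B2 H2 B3 H3 \<alpha> \<beta> \<delta>"
    and iso: "\<And>i. lin_iso scale (bnd i) (homology i) (B1 i) (H1 i) (\<theta> i)"
  shows "long_exact scale bnd homology B2 H2 B3 H3
    (\<lambda>i. \<alpha> i \<circ> \<theta> i) \<beta> (\<lambda>i. inv_into (homology (i - 1)) (\<theta> (i - 1)) \<circ> \<delta> i)"
  unfolding long_exact_def
proof (intro allI conjI)
  fix i :: int
  let ?\<theta>' = "inv_into (homology (i - 1)) (\<theta> (i - 1))"
  have les_i: "hom_lin scale (B1 i) (H1 i) (B2 i) (H2 i) (\<alpha> i)"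
    "hom_lin scale (B2 i) (H2 i) (B3 i) (H3 i) (\<beta> i)"
    "hom_lin scale (B3 i) (H3 i) (B1 (i - 1)) (H1 (i - 1)) (\<delta> i)"
    "exact_at (H1 i) (\<alpha> i) (H2 i) (\<beta> i) (B3 i)"
    "exact_at (H2 i) (\<beta> i) (H3 i) (\<delta> i) (B1 (i - 1))"
    "exact_at (H3 i) (\<delta> i) (H1 (i - 1)) (\<alpha> (i - 1)) (B2 (i - 1))"
    using les unfolding long_exact_def by blast+
  have \<theta>: "hom_lin scale (bnd j) (homology j) (B1 j) (H1 j) (\<theta> j)" "bij_betw (\<theta> j) (homology j) (H1 j)"
    "\<theta> j (bnd j) = B1 j" for j
    using iso[of j] by (simp_all add: lin_iso_def)
  have \<theta>': "hom_lin scale (B1 (i - 1)) (H1 (i - 1)) (bnd (i - 1)) (homology (i - 1)) ?\<theta>'"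
    "bij_betw ?\<theta>' (H1 (i - 1)) (homology (i - 1))" "?\<theta>' (B1 (i - 1)) = bnd (i - 1)"
    using lin_iso_inv_into[OF iso] by (simp_all add: lin_iso_def)
  have B1_in: "B1 (i - 1) \<in> H1 (i - 1)"
    using \<theta>(2,3) bnd_in_homology by (metis bij_betw_apply)
  show "hom_lin scale (bnd i) (homology i) (B2 i) (H2 i) (\<alpha> i \<circ> \<theta> i)"
    using \<theta>(1) les_i(1) by (rule hom_lin_comp)
  show "hom_lin scale (B2 i) (H2 i) (B3 i) (H3 i) (\<beta> i)" by (rule les_i(2))
  show "hom_lin scale (B3 i) (H3 i) (bnd (i - 1)) (homology (i - 1)) (?\<theta>' \<circ> \<delta> i)"
    using les_i(3) \<theta>'(1) by (rule hom_lin_comp)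
  have "(\<alpha> i \<circ> \<theta> i) ` homology i = \<alpha> i ` H1 i"
    by (metis \<theta>(2) bij_betw_imp_surj_on image_comp)
  then show "exact_at (homology i) (\<alpha> i \<circ> \<theta> i) (H2 i) (\<beta> i) (B3 i)"
    using les_i(4) by (simp only: exact_at_def)
  have "?\<theta>' (\<delta> i Y) = bnd (i - 1) \<longleftrightarrow> \<delta> i Y = B1 (i - 1)" if "Y \<in> H3 i" for Y
  proof -
    have "\<delta> i Y \<in> H1 (i - 1)" using les_i(3) that by (simp add: hom_lin_def)
    then show ?thesis using \<theta>'(2,3) B1_in by (metis bij_betw_def inj_on_eq_iff)
  qed
  then show "exact_at (H2 i) (\<beta> i) (H3 i) (?\<theta>' \<circ> \<delta> i) (bnd (i - 1))"
    using les_i(5) by (auto simp: exact_at_def)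
  have "(?\<theta>' \<circ> \<delta> i) ` H3 i = ?\<theta>' ` \<delta> i ` H3 i"
    by (simp only: image_comp)
  then show "exact_at (H3 i) (?\<theta>' \<circ> \<delta> i) (homology (i - 1)) (\<alpha> (i - 1) \<circ> \<theta> (i - 1)) (B2 (i - 1))"
    using les_i(6) image_inv_into_Collect[OF \<theta>(2)] by (simp add: exact_at_def)
qed

end

text \<open>\<open>C\<close> models the quotient \<open>B/A\<close> shifted down by one degree; \<open>q\<close> is a degreewise linear
  section of the projection \<open>p\<close>, and the connecting map sends a cycle \<open>w\<close> to \<open>D (q w)\<close>.\<close>
locale short_exact =
  A: chain_complex scale CA DA + B: chain_complex scale CB DB + C: chain_complex scale CC DC
  for scale :: "'r::comm_ring_1 \<Rightarrow> 'm::ab_group_add \<Rightarrow> 'm"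
    and CA :: "int \<Rightarrow> ('b \<Rightarrow> 'm) set" and DA
    and CB :: "int \<Rightarrow> ('b \<Rightarrow> 'm) set" and DB
    and CC :: "int \<Rightarrow> ('b \<Rightarrow> 'm) set" and DC +
  fixes p q :: "('b \<Rightarrow> 'm) \<Rightarrow> ('b \<Rightarrow> 'm)"
  assumes CA_subset: "CA k \<subseteq> CB k"
    and DA_eq_DB: "x \<in> CA k \<Longrightarrow> DA k x = DB k x"
    and p_in_CC: "x \<in> CB k \<Longrightarrow> p x \<in> CC (k - 1)"
    and q_in_CB: "w \<in> CC k \<Longrightarrow> q w \<in> CB (k + 1)"
    and p_q: "w \<in> CC k \<Longrightarrow> p (q w) = w"
    and p_add: "p (x + y) = p x + p y"
    and q_add: "q (x + y) = q x + q y"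
    and p_scale: "p (scale_fun scale r x) = scale_fun scale r (p x)"
    and q_scale: "q (scale_fun scale r x) = scale_fun scale r (q x)"
    and p_D: "x \<in> CB k \<Longrightarrow> p (DB k x) = DC (k - 1) (p x)"
    and p_eq_0_iff: "x \<in> CB k \<Longrightarrow> p x = 0 \<longleftrightarrow> x \<in> CA k"
begin

lemma p_zero: "p 0 = 0"
  using p_add[of 0 0] by simp

lemma p_diff: "p (x - y) = p x - p y"
  using p_add[of "x - y" y] by (simp add: algebra_simps)

lemma p_in_CC_succ: "x \<in> CB (k + 1) \<Longrightarrow> p x \<in> CC k"
  using p_in_CC[of x "k + 1"] by simp

lemma p_D_succ: "x \<in> CB (k + 1) \<Longrightarrow> p (DB (k + 1) x) = DC k (p x)"
  using p_D[of x "k + 1"] by simp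

lemma q_p_diff_in_CA: "x \<in> CB (k + 1) \<Longrightarrow> q (p x) - x \<in> CA (k + 1)"
proof -
  assume x: "x \<in> CB (k + 1)"
  have "q (p x) - x \<in> CB (k + 1)" using q_in_CB p_in_CC_succ x B.diff_in_Ch by blast
  moreover have "p (q (p x) - x) = 0" using p_q[OF p_in_CC_succ[OF x]] by (simp add: p_diff)
  ultimately show ?thesis using p_eq_0_iff by blast
qed

lemma A_cyc_subset: "A.cyc k \<subseteq> B.cyc k"
  using CA_subset DA_eq_DB by (auto simp: A.cyc_def B.cyc_def)

lemma A_bnd_subset: "A.bnd k \<subseteq> B.bnd k"
  using CA_subset DA_eq_DB by (auto simp: A.bnd_def B.bnd_def)

lemma connecting_cyc: "w \<in> C.cyc k \<Longrightarrow> DB (k + 1) (q w) \<in> A.cyc k"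
proof -
  assume w: "w \<in> C.cyc k"
  have qw: "q w \<in> CB (k + 1)" using q_in_CB w C.cyc_subset_Ch by blast
  have "p (DB (k + 1) (q w)) = 0" using p_D_succ qw p_q w C.cyc_subset_Ch by (auto simp: C.cyc_def)
  then have A: "DB (k + 1) (q w) \<in> CA k" using p_eq_0_iff B.D_in_Ch_succ[OF qw] by blast
  have "DA k (DB (k + 1) (q w)) = 0" using DA_eq_DB[OF A] B.D_D_succ[OF qw] by simp
  then show ?thesis using A by (simp add: A.cyc_def)
qed

lemma connecting_bnd: "w \<in> C.bnd k \<Longrightarrow> DB (k + 1) (q w) \<in> A.bnd k"
proof -
  assume "w \<in> C.bnd k"
  then obtain u where u: "u \<in> CC (k + 1)" "w = DC (k + 1) u" by (auto simp: C.bnd_def)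
  have w: "w \<in> CC k" using u C.D_in_Ch_succ by blast
  have qu: "q u \<in> CB (k + 1 + 1)" using q_in_CB u by blast
  have dqu: "DB (k + 1 + 1) (q u) \<in> CB (k + 1)" using B.D_in_Ch_succ qu by blast
  define e where "e = q w - DB (k + 1 + 1) (q u)"
  have eB: "e \<in> CB (k + 1)" unfolding e_def using q_in_CB w dqu B.diff_in_Ch by blast
  have "p e = w - DC (k + 1) (p (q u))" unfolding e_def p_diff using p_q w p_D_succ[OF qu] by simp
  also have "\<dots> = 0" using p_q u by simp
  finally have eA: "e \<in> CA (k + 1)" using p_eq_0_iff eB by blast
  have "DB (k + 1) (q w) = DB (k + 1) (e + DB (k + 1 + 1) (q u))" by (simp add: e_def)
  also have "\<dots> = DB (k + 1) e" using B.D_add[OF eB dqu] B.D_D_succ[OF qu] by simp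
  also have "\<dots> = DA (k + 1) e" using DA_eq_DB eA by simp
  finally show ?thesis using eA unfolding A.bnd_def by blast
qed

lemma p_cyc: "x \<in> B.cyc k \<Longrightarrow> p x \<in> C.cyc (k - 1)"
  by (auto simp: B.cyc_def C.cyc_def p_in_CC p_D[symmetric] p_zero)

lemma p_bnd: "x \<in> B.bnd k \<Longrightarrow> p x \<in> C.bnd (k - 1)"
proof -
  assume "x \<in> B.bnd k"
  then obtain y where y: "y \<in> CB (k + 1)" "x = DB (k + 1) y" by (auto simp: B.bnd_def)
  then have "p x = DC k (p y)" using p_D_succ by simp
  moreover have "p y \<in> CC (k - 1 + 1)" using p_in_CC_succ y by simp
  ultimately show ?thesis unfolding C.bnd_def by simp
qed

definition incl where "incl k = induced_map (B.cls k) id"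
definition proj where "proj k = induced_map (C.cls (k - 1)) p"
definition connecting where "connecting k = induced_map (A.cls k) (\<lambda>w. DB (k + 1) (q w))"

lemma hom_lin_incl: "hom_lin scale (A.bnd k) (A.homology k) (B.bnd k) (B.homology k) (incl k)"
  and incl_cls: "z \<in> A.cyc k \<Longrightarrow> incl k (A.cls k z) = B.cls k z"
  using induced_map[OF A.chain_complex_axioms B.chain_complex_axioms, of k id k]
    A_cyc_subset[THEN subsetD] A_bnd_subset[THEN subsetD]
  by (auto simp: incl_def)

lemma hom_lin_proj: "hom_lin scale (B.bnd k) (B.homology k) (C.bnd (k - 1)) (C.homology (k - 1)) (proj k)"
  and proj_cls: "z \<in> B.cyc k \<Longrightarrow> proj k (B.cls k z) = C.cls (k - 1) (p z)"
  using induced_map[OF B.chain_complex_axioms C.chain_complex_axioms, of k p "k - 1"]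
    p_cyc p_bnd p_add p_scale
  by (auto simp: proj_def)

lemma hom_lin_connecting: "hom_lin scale (C.bnd k) (C.homology k) (A.bnd k) (A.homology k) (connecting k)"
  and connecting_cls: "w \<in> C.cyc k \<Longrightarrow> connecting k (C.cls k w) = A.cls k (DB (k + 1) (q w))"
proof -
  have "DB (k + 1) (q (x + y)) = DB (k + 1) (q x) + DB (k + 1) (q y)"
    and "DB (k + 1) (q (scale_fun scale r x)) = scale_fun scale r (DB (k + 1) (q x))"
    if "x \<in> C.cyc k" "y \<in> C.cyc k" for x y r
    using that q_add q_scale B.D_add B.D_scale q_in_CB C.cyc_subset_Ch by (metis subsetD)+
  then show "hom_lin scale (C.bnd k) (C.homology k) (A.bnd k) (A.homology k) (connecting k)"
    "w \<in> C.cyc k \<Longrightarrow> connecting k (C.cls k w) = A.cls k (DB (k + 1) (q w))"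
    using induced_map[OF C.chain_complex_axioms A.chain_complex_axioms, of k "\<lambda>w. DB (k + 1) (q w)" k]
      connecting_cyc connecting_bnd
    by (auto simp: connecting_def)
qed

lemma exact_at_A: "connecting k ` C.homology k = {Y \<in> A.homology k. incl k Y = B.bnd k}"
proof (intro set_eqI iffI)
  fix Y assume "Y \<in> connecting k ` C.homology k"
  then obtain w where w: "w \<in> C.cyc k" "Y = connecting k (C.cls k w)" by (auto simp: C.homology_def)
  let ?z = "DB (k + 1) (q w)"
  have Y: "Y = A.cls k ?z" using w connecting_cls by simp
  have z: "?z \<in> A.cyc k" using connecting_cyc w by blast
  have "?z \<in> B.bnd k" unfolding B.bnd_def using q_in_CB w C.cyc_subset_Ch by blast
  then have "incl k Y = B.bnd k" using incl_cls z Y B.cls_eq_zero_iff by simp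
  then show "Y \<in> {Y \<in> A.homology k. incl k Y = B.bnd k}" using Y z A.cls_in_homology by auto
next
  fix Y assume "Y \<in> {Y \<in> A.homology k. incl k Y = B.bnd k}"
  then obtain z where z: "z \<in> A.cyc k" "Y = A.cls k z" "incl k Y = B.bnd k"
    by (auto simp: A.homology_def)
  then have "z \<in> B.bnd k" using incl_cls B.cls_eq_zero_iff by simp
  then obtain c where c: "c \<in> CB (k + 1)" "z = DB (k + 1) c" by (auto simp: B.bnd_def)
  have "p z = 0" using p_eq_0_iff[of z k] z(1) A.cyc_subset_Ch CA_subset by auto
  then have pc: "p c \<in> C.cyc k" using p_in_CC_succ[OF c(1)] p_D_succ[OF c(1)] c(2)
    by (auto simp: C.cyc_def)
  have e: "q (p c) - c \<in> CA (k + 1)" using q_p_diff_in_CA c by blast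
  have qpc: "q (p c) \<in> CB (k + 1)" using q_in_CB p_in_CC_succ c by blast
  have "DB (k + 1) (q (p c)) - z = DB (k + 1) (q (p c) - c)" using B.D_diff qpc c by simp
  also have "\<dots> = DA (k + 1) (q (p c) - c)" using DA_eq_DB e by simp
  finally have "DB (k + 1) (q (p c)) - z \<in> A.bnd k" unfolding A.bnd_def using e by blast
  then have "connecting k (C.cls k (p c)) = Y" using connecting_cls pc z A.cls_eqI by simp
  then show "Y \<in> connecting k ` C.homology k" using pc C.cls_in_homology by blast
qed

lemma exact_at_B: "incl k ` A.homology k = {Y \<in> B.homology k. proj k Y = C.bnd (k - 1)}"
proof (intro set_eqI iffI)
  fix Y assume "Y \<in> incl k ` A.homology k"
  then obtain z where z: "z \<in> A.cyc k" "Y = incl k (A.cls k z)" by (auto simp: A.homology_def)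
  have Y: "Y = B.cls k z" using z incl_cls by simp
  have zB: "z \<in> B.cyc k" using A_cyc_subset z by blast
  have "p z = 0" using p_eq_0_iff[of z k] z A.cyc_subset_Ch CA_subset by auto
  then have "proj k Y = C.bnd (k - 1)" using proj_cls zB Y C.cls_zero by simp
  then show "Y \<in> {Y \<in> B.homology k. proj k Y = C.bnd (k - 1)}" using Y zB B.cls_in_homology by simp
next
  fix Y assume "Y \<in> {Y \<in> B.homology k. proj k Y = C.bnd (k - 1)}"
  then obtain z where z: "z \<in> B.cyc k" "Y = B.cls k z" "proj k Y = C.bnd (k - 1)"
    by (auto simp: B.homology_def)
  then have "p z \<in> C.bnd (k - 1)" using proj_cls C.cls_eq_zero_iff by simp
  then obtain w where w: "w \<in> CC k" "p z = DC k w" by (auto simp: C.bnd_def)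
  have qw: "q w \<in> CB (k + 1)" using q_in_CB w by blast
  have dq: "DB (k + 1) (q w) \<in> CB k" using B.D_in_Ch_succ qw by blast
  have zC: "z \<in> CB k" using z B.cyc_subset_Ch by blast
  define z' where "z' = z - DB (k + 1) (q w)"
  have z'B: "z' \<in> CB k" unfolding z'_def using zC dq B.diff_in_Ch by blast
  have "p z' = p z - DC (k + 1 - 1) (p (q w))" unfolding z'_def p_diff using p_D[OF qw] by simp
  also have "\<dots> = 0" using w p_q by simp
  finally have z'A: "z' \<in> CA k" using p_eq_0_iff z'B by blast
  have "DA k z' = DB k z - DB k (DB (k + 1) (q w))"
    using DA_eq_DB z'A B.D_diff zC dq by (simp add: z'_def)
  also have "\<dots> = 0" using z B.D_D_succ[OF qw] by (simp add: B.cyc_def)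
  finally have z'Z: "z' \<in> A.cyc k" using z'A by (simp add: A.cyc_def)
  have "z' - z = DB (k + 1) (- q w)" using B.D_uminus[OF qw] by (simp add: z'_def)
  then have "z' - z \<in> B.bnd k" unfolding B.bnd_def using B.uminus_in_Ch[OF qw] by blast
  then have "incl k (A.cls k z') = Y" using incl_cls[OF z'Z] z B.cls_eqI by simp
  then show "Y \<in> incl k ` A.homology k" using z'Z A.cls_in_homology by blast
qed

lemma exact_at_C: "proj (k + 1) ` B.homology (k + 1) = {Y \<in> C.homology k. connecting k Y = A.bnd k}"
proof (intro set_eqI iffI)
  fix Y assume "Y \<in> proj (k + 1) ` B.homology (k + 1)"
  then obtain z where z: "z \<in> B.cyc (k + 1)" "Y = proj (k + 1) (B.cls (k + 1) z)"
    by (auto simp: B.homology_def)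
  have Y: "Y = C.cls k (p z)" using z proj_cls by simp
  have pz: "p z \<in> C.cyc k" using p_cyc[OF z(1)] by simp
  have zC: "z \<in> CB (k + 1)" using z B.cyc_subset_Ch by blast
  have e: "q (p z) - z \<in> CA (k + 1)" using q_p_diff_in_CA zC by blast
  have qpz: "q (p z) \<in> CB (k + 1)" using q_in_CB pz C.cyc_subset_Ch by blast
  have "DB (k + 1) (q (p z)) = DB (k + 1) (q (p z) - z) + DB (k + 1) z"
    using B.D_diff[OF qpz zC] by simp
  also have "\<dots> = DA (k + 1) (q (p z) - z)" using z DA_eq_DB e by (simp add: B.cyc_def)
  finally have "DB (k + 1) (q (p z)) \<in> A.bnd k" unfolding A.bnd_def using e by blast
  then have "connecting k Y = A.bnd k" using connecting_cls pz Y A.cls_eq_zero_iff by simp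
  then show "Y \<in> {Y \<in> C.homology k. connecting k Y = A.bnd k}" using Y pz C.cls_in_homology by simp
next
  fix Y assume "Y \<in> {Y \<in> C.homology k. connecting k Y = A.bnd k}"
  then obtain w where w: "w \<in> C.cyc k" "Y = C.cls k w" "connecting k Y = A.bnd k"
    by (auto simp: C.homology_def)
  then have "DB (k + 1) (q w) \<in> A.bnd k" using connecting_cls A.cls_eq_zero_iff by simp
  then obtain e where e: "e \<in> CA (k + 1)" "DB (k + 1) (q w) = DA (k + 1) e" by (auto simp: A.bnd_def)
  have qw: "q w \<in> CB (k + 1)" using q_in_CB w C.cyc_subset_Ch by blast
  have eB: "e \<in> CB (k + 1)" using e CA_subset by blast
  define z where "z = q w - e"
  have zC: "z \<in> CB (k + 1)" unfolding z_def using qw eB B.diff_in_Ch by blast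
  have "DB (k + 1) z = 0" unfolding z_def using B.D_diff[OF qw eB] e DA_eq_DB by simp
  then have zZ: "z \<in> B.cyc (k + 1)" using zC by (simp add: B.cyc_def)
  have "p e = 0" using p_eq_0_iff[of e] eB e by auto
  moreover have "p (q w) = w" using p_q w(1) C.cyc_subset_Ch by blast
  ultimately have "p z = w" unfolding z_def p_diff by simp
  then have "proj (k + 1) (B.cls (k + 1) z) = Y" using proj_cls[OF zZ] w by simp
  then show "Y \<in> proj (k + 1) ` B.homology (k + 1)" using zZ B.cls_in_homology by blast
qed

theorem long_exact_sequence:
  "long_exact scale C.bnd C.homology A.bnd A.homology B.bnd B.homology connecting incl proj"
  unfolding long_exact_def exact_at_def
  using hom_lin_connecting hom_lin_incl hom_lin_proj exact_at_A exact_at_B exact_at_C[of "_ - 1"]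
  by simp

end

text \<open>An inclusion of complexes that is bijective on homology, stated on representatives.\<close>
definition quasi_iso_incl where
  "quasi_iso_incl Ch1 D1 Ch2 D2 \<longleftrightarrow> (\<forall>k.
     chain_complex.cyc Ch1 D1 k \<subseteq> chain_complex.cyc Ch2 D2 k \<and>
     chain_complex.bnd Ch1 D1 k \<subseteq> chain_complex.bnd Ch2 D2 k \<and>
     (\<forall>z\<in>chain_complex.cyc Ch2 D2 k. \<exists>z'\<in>chain_complex.cyc Ch1 D1 k. z - z' \<in> chain_complex.bnd Ch2 D2 k) \<and>
     (\<forall>z\<in>chain_complex.cyc Ch1 D1 k. z \<in> chain_complex.bnd Ch2 D2 k \<longrightarrow> z \<in> chain_complex.bnd Ch1 D1 k))"

lemma quasi_iso_incl_refl:
  assumes "chain_complex scale Ch D"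
  shows "quasi_iso_incl Ch D Ch D"
proof -
  interpret chain_complex scale Ch D by (rule assms)
  show ?thesis unfolding quasi_iso_incl_def using zero_in_bnd by force
qed

lemma quasi_iso_incl_trans:
  assumes "chain_complex scale Ch3 D3"
    and "quasi_iso_incl Ch1 D1 Ch2 D2" and "quasi_iso_incl Ch2 D2 Ch3 D3"
  shows "quasi_iso_incl Ch1 D1 Ch3 D3"
  unfolding quasi_iso_incl_def
proof (intro allI conjI ballI impI)
  fix k
  interpret C3: chain_complex scale Ch3 D3 by (rule assms(1))
  let ?Z1 = "chain_complex.cyc Ch1 D1 k" and ?B1 = "chain_complex.bnd Ch1 D1 k"
  let ?Z2 = "chain_complex.cyc Ch2 D2 k" and ?B2 = "chain_complex.bnd Ch2 D2 k"
  have 12: "?Z1 \<subseteq> ?Z2" "?B1 \<subseteq> ?B2" "\<forall>z\<in>?Z2. \<exists>z'\<in>?Z1. z - z' \<in> ?B2" "\<forall>z\<in>?Z1. z \<in> ?B2 \<longrightarrow> z \<in> ?B1"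
    using assms(2) unfolding quasi_iso_incl_def by blast+
  have 23: "?Z2 \<subseteq> C3.cyc k" "?B2 \<subseteq> C3.bnd k" "\<forall>z\<in>C3.cyc k. \<exists>z'\<in>?Z2. z - z' \<in> C3.bnd k"
    "\<forall>z\<in>?Z2. z \<in> C3.bnd k \<longrightarrow> z \<in> ?B2"
    using assms(3) unfolding quasi_iso_incl_def by blast+
  show "?Z1 \<subseteq> C3.cyc k" "?B1 \<subseteq> C3.bnd k" using 12(1,2) 23(1,2) by blast+
  show "\<exists>z'\<in>?Z1. z - z' \<in> C3.bnd k" if z: "z \<in> C3.cyc k" for z
  proof -
    obtain z1 where z1: "z1 \<in> ?Z2" "z - z1 \<in> C3.bnd k" using bspec[OF 23(3) z] ..
    obtain z2 where z2: "z2 \<in> ?Z1" "z1 - z2 \<in> ?B2" using bspec[OF 12(3) z1(1)] ..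
    have "z1 - z2 \<in> C3.bnd k" using z2(2) 23(2) by blast
    from C3.add_in_bnd[OF z1(2) this] have "z - z2 \<in> C3.bnd k" by simp
    then show ?thesis using z2(1) by blast
  qed
  show "z \<in> ?B1" if "z \<in> ?Z1" "z \<in> C3.bnd k" for z
    using that 12(1,4) 23(4) by blast
qed

lemma lin_iso_induced_incl:
  assumes c1: "chain_complex scale Ch1 D1" and c2: "chain_complex scale Ch2 D2"
    and qi: "quasi_iso_incl Ch1 D1 Ch2 D2"
  shows "lin_iso scale (chain_complex.bnd Ch1 D1 k) (chain_complex.homology Ch1 D1 k)
    (chain_complex.bnd Ch2 D2 k) (chain_complex.homology Ch2 D2 k) (induced_map (chain_complex.cls Ch2 D2 k) id)"
proof -
  interpret A: chain_complex scale Ch1 D1 by (rule c1)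
  interpret B: chain_complex scale Ch2 D2 by (rule c2)
  have qi_k: "A.cyc k \<subseteq> B.cyc k" "A.bnd k \<subseteq> B.bnd k" "\<forall>z\<in>B.cyc k. \<exists>z'\<in>A.cyc k. z - z' \<in> B.bnd k"
    "\<forall>z\<in>A.cyc k. z \<in> B.bnd k \<longrightarrow> z \<in> A.bnd k"
    using qi unfolding quasi_iso_incl_def by blast+
  let ?i = "induced_map (B.cls k) id"
  have hom: "hom_lin scale (A.bnd k) (A.homology k) (B.bnd k) (B.homology k) ?i"
    and ev: "\<And>z. z \<in> A.cyc k \<Longrightarrow> ?i (A.cls k z) = B.cls k z"
    using induced_map[OF c1 c2, of k id k] qi_k(1,2) by auto
  have inj: "inj_on ?i (A.homology k)"
  proof (rule inj_onI)
    fix U V assume "U \<in> A.homology k" "V \<in> A.homology k" and e: "?i U = ?i V"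
    then obtain z1 z2 where z: "z1 \<in> A.cyc k" "U = A.cls k z1" "z2 \<in> A.cyc k" "V = A.cls k z2"
      by (auto simp: A.homology_def)
    then have "z1 - z2 \<in> B.bnd k" using e ev B.cls_eq_iff by simp
    then have "z1 - z2 \<in> A.bnd k" using qi_k(4) A.diff_in_cyc z by blast
    then show "U = V" using z A.cls_eqI by simp
  qed
  have surj: "?i ` A.homology k = B.homology k"
  proof (intro set_eqI iffI)
    fix W assume "W \<in> ?i ` A.homology k"
    then show "W \<in> B.homology k" using hom unfolding hom_lin_def by blast
  next
    fix W assume "W \<in> B.homology k"
    then obtain z where z: "z \<in> B.cyc k" "W = B.cls k z" by (auto simp: B.homology_def)
    obtain z' where z': "z' \<in> A.cyc k" "z - z' \<in> B.bnd k" using qi_k(3) z by blast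
    have "?i (A.cls k z') = W" using ev[OF z'(1)] z B.cls_eqI[OF z'(2)] by simp
    then show "W \<in> ?i ` A.homology k" using z' A.cls_in_homology by blast
  qed
  have "?i (A.bnd k) = B.bnd k" using ev[OF A.zero_in_cyc] A.cls_zero B.cls_zero by simp
  then show ?thesis using hom inj surj by (simp add: lin_iso_def bij_betw_def)
qed

section \<open>Boolean complexes\<close>

definition signed :: "nat \<Rightarrow> 'm::ab_group_add \<Rightarrow> 'm" where
  "signed n v = (if even n then v else - v)"

definition count_below :: "('a \<Rightarrow> nat) \<Rightarrow> 'a set \<Rightarrow> 'a \<Rightarrow> nat" where
  "count_below num S b = card {s \<in> S. num s < num b}"

definition count_above :: "('a \<Rightarrow> nat) \<Rightarrow> 'a \<Rightarrow> 'a set \<Rightarrow> nat" where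
  "count_above num a T = card {t \<in> T. num a < num t}"

lemma sgn_term_eq_signed: "sgn_term num S b v = signed (count_below num S b) v"
  by (simp add: sgn_term_def signed_def count_below_def)

lemma signed_add: "signed n (u + v) = signed n u + signed n v"
  by (simp add: signed_def)

lemma signed_zero: "signed n 0 = 0"
  by (simp add: signed_def)

lemma signed_eq_0_iff: "signed n v = 0 \<longleftrightarrow> v = 0"
  by (simp add: signed_def)

lemma signed_plus: "signed (m + n) v = signed m (signed n v)"
  by (simp add: signed_def)

lemma signed_signed: "signed n (signed n v) = v"
  by (simp add: signed_def)

lemma signed_sum: "signed n (sum f A) = (\<Sum>x\<in>A. signed n (f x))"
  by (simp add: signed_def sum_negf)

lemma count_below_insert: "finite S \<Longrightarrow> b' \<notin> S \<Longrightarrow>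
   count_below num (insert b' S) b = count_below num S b + (if num b' < num b then 1 else 0)"
  by (cases "num b' < num b") (simp_all add: count_below_def insert_compr[symmetric] Collect_conj_eq)

lemma count_above_insert: "finite T \<Longrightarrow> b \<notin> T \<Longrightarrow>
   count_above num a (insert b T) = count_above num a T + (if num a < num b then 1 else 0)"
  by (cases "num a < num b") (simp_all add: count_above_def insert_compr[symmetric] Collect_conj_eq)

lemma sum_antisymmetric_offdiag:
  fixes G :: "'a \<Rightarrow> 'a \<Rightarrow> 'm::ab_group_add"
  assumes "finite A" and "\<And>b b'. b \<in> A \<Longrightarrow> b' \<in> A \<Longrightarrow> b \<noteq> b' \<Longrightarrow> G b b' = - G b' b"
  shows "(\<Sum>b\<in>A. \<Sum>b'\<in>A - {b}. G b b') = 0"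
  using assms
proof (induction A rule: finite_induct)
  case empty then show ?case by simp
next
  case (insert x A)
  have IH: "(\<Sum>b\<in>A. \<Sum>b'\<in>A - {b}. G b b') = 0" using insert.IH insert.prems by blast
  have row: "(\<Sum>b'\<in>insert x A - {b}. G b b') = G b x + (\<Sum>b'\<in>A - {b}. G b b')" if "b \<in> A" for b
  proof -
    have "insert x A - {b} = insert x (A - {b})" using that insert.hyps by auto
    then show ?thesis using insert.hyps by simp
  qed
  have "(\<Sum>b\<in>insert x A. \<Sum>b'\<in>insert x A - {b}. G b b')
      = (\<Sum>b\<in>A. G x b) + ((\<Sum>b\<in>A. G b x) + (\<Sum>b\<in>A. \<Sum>b'\<in>A - {b}. G b b'))"
    using insert.hyps row by (simp add: sum.distrib insert_Diff_if)
  also have "\<dots> = (\<Sum>b\<in>A. G x b + G b x)" using IH by (simp add: sum.distrib)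
  also have "\<dots> = 0"
  proof (rule sum.neutral, rule ballI)
    fix b assume "b \<in> A"
    then have "G x b = - G b x" using insert by blast
    then show "G x b + G b x = 0" by simp
  qed
  finally show ?case .
qed

locale sheaf =
  fixes scale :: "'r::comm_ring_1 \<Rightarrow> 'm::ab_group_add \<Rightarrow> 'm" and L :: "'a::order set"
    and F :: "'a \<Rightarrow> 'm set" and Fr :: "'a \<Rightarrow> 'a \<Rightarrow> 'm \<Rightarrow> 'm"
  assumes module: "module scale" and sheaf: "sheaf_on scale L F Fr"
begin

lemma scale_signed: "scale r (signed n v) = signed n (scale r v)"
  by (simp add: signed_def module.scale_minus_right[OF module])

lemma F_zero: "x \<in> L \<Longrightarrow> 0 \<in> F x"
  using sheaf by (simp add: sheaf_on_def)

lemma F_add: "x \<in> L \<Longrightarrow> v \<in> F x \<Longrightarrow> w \<in> F x \<Longrightarrow> v + w \<in> F x"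
  using sheaf by (simp add: sheaf_on_def)

lemma F_scale: "x \<in> L \<Longrightarrow> v \<in> F x \<Longrightarrow> scale r v \<in> F x"
  using sheaf by (simp add: sheaf_on_def)

lemma F_uminus: "x \<in> L \<Longrightarrow> v \<in> F x \<Longrightarrow> - v \<in> F x"
  using F_scale[of x v "- 1"] module.scale_minus_left[OF module] module.scale_one[OF module] by simp

lemma F_signed: "x \<in> L \<Longrightarrow> v \<in> F x \<Longrightarrow> signed n v \<in> F x"
  using F_uminus by (simp add: signed_def)

lemma F_sum: "x \<in> L \<Longrightarrow> (\<And>i. i \<in> I \<Longrightarrow> f i \<in> F x) \<Longrightarrow> sum f I \<in> F x"
  by (induction I rule: infinite_finite_induct) (simp_all add: F_zero F_add)

lemma Fr_in: "x \<in> L \<Longrightarrow> y \<in> L \<Longrightarrow> x \<le> y \<Longrightarrow> v \<in> F y \<Longrightarrow> Fr y x v \<in> F x"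
  using sheaf by (simp add: sheaf_on_def)

lemma Fr_add:
  "x \<in> L \<Longrightarrow> y \<in> L \<Longrightarrow> x \<le> y \<Longrightarrow> v \<in> F y \<Longrightarrow> w \<in> F y \<Longrightarrow> Fr y x (v + w) = Fr y x v + Fr y x w"
  using sheaf by (simp add: sheaf_on_def)

lemma Fr_scale: "x \<in> L \<Longrightarrow> y \<in> L \<Longrightarrow> x \<le> y \<Longrightarrow> v \<in> F y \<Longrightarrow> Fr y x (scale r v) = scale r (Fr y x v)"
  using sheaf by (simp add: sheaf_on_def)

lemma Fr_id: "x \<in> L \<Longrightarrow> v \<in> F x \<Longrightarrow> Fr x x v = v"
  using sheaf by (simp add: sheaf_on_def)

lemma Fr_comp:
  "x \<in> L \<Longrightarrow> y \<in> L \<Longrightarrow> z \<in> L \<Longrightarrow> x \<le> y \<Longrightarrow> y \<le> z \<Longrightarrow> v \<in> F z \<Longrightarrow> Fr y x (Fr z y v) = Fr z x v"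
  using sheaf by (simp add: sheaf_on_def)

lemma Fr_zero: "x \<in> L \<Longrightarrow> y \<in> L \<Longrightarrow> x \<le> y \<Longrightarrow> Fr y x 0 = 0"
  using Fr_add[of x y 0 0] F_zero[of y] by simp

lemma Fr_uminus: "x \<in> L \<Longrightarrow> y \<in> L \<Longrightarrow> x \<le> y \<Longrightarrow> v \<in> F y \<Longrightarrow> Fr y x (- v) = - Fr y x v"
  using Fr_add[of x y v "- v"] F_uminus[of y v] Fr_zero[of x y] by (simp add: eq_neg_iff_add_eq_0 add.commute)

lemma Fr_signed: "x \<in> L \<Longrightarrow> y \<in> L \<Longrightarrow> x \<le> y \<Longrightarrow> v \<in> F y \<Longrightarrow> Fr y x (signed n v) = signed n (Fr y x v)"
  using Fr_uminus by (simp add: signed_def)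

lemma Fr_sum: "x \<in> L \<Longrightarrow> y \<in> L \<Longrightarrow> x \<le> y \<Longrightarrow> (\<And>i. i \<in> I \<Longrightarrow> f i \<in> F y) \<Longrightarrow>
   Fr y x (sum f I) = (\<Sum>i\<in>I. Fr y x (f i))"
proof (induction I rule: infinite_finite_induct)
  case (insert a A)
  have "sum f A \<in> F y" using insert.prems by (intro F_sum) auto
  then show ?case using insert Fr_add[of x y "f a" "sum f A"] by simp
qed (simp_all add: Fr_zero)

end

text \<open>With \<open>X\<close> the atoms and \<open>J\<close> the join this is the chain complex
  of the Boolean cover; joining in addition with an atom \<open>a\<close> gives the link of \<open>a\<close> and the
  Boolean cover of the restriction \<open>L\<^sup>a\<close>.\<close>
definition bool_chains :: "'a set \<Rightarrow> ('a set \<Rightarrow> 'a) \<Rightarrow> ('a \<Rightarrow> 'm::ab_group_add set) \<Rightarrow> int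
    \<Rightarrow> ('a set \<Rightarrow> 'm) set" where
  "bool_chains X J F k = {c. (\<forall>S. S \<subseteq> X \<and> int (card S) = k \<longrightarrow> c S \<in> F (J S)) \<and>
                             (\<forall>S. \<not> (S \<subseteq> X \<and> int (card S) = k) \<longrightarrow> c S = 0)}"

definition bool_bd :: "'a set \<Rightarrow> ('a set \<Rightarrow> 'a) \<Rightarrow> ('a \<Rightarrow> 'a \<Rightarrow> 'm \<Rightarrow> 'm) \<Rightarrow> ('a \<Rightarrow> nat) \<Rightarrow> int
    \<Rightarrow> ('a set \<Rightarrow> 'm::ab_group_add) \<Rightarrow> ('a set \<Rightarrow> 'm)" where
  "bool_bd X J Fr num k c = (\<lambda>S. if S \<subseteq> X \<and> int (card S) = k - 1
      then (\<Sum>b\<in>X - S. sgn_term num S b (Fr (J (insert b S)) (J S) (c (insert b S))))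
      else 0)"

lemma chains_eq_bool_chains: "chains M F = bool_chains (atoms M) (bjoin M) F"
  by (auto simp: fun_eq_iff chains_def bool_chains_def)

lemma bd_eq_bool_bd: "bd M Fr num = bool_bd (atoms M) (bjoin M) Fr num"
  by (simp add: fun_eq_iff bd_def bool_bd_def)

lemma bool_chains_cong: "(\<And>S. S \<subseteq> X \<Longrightarrow> J S = J' S) \<Longrightarrow> bool_chains X J F = bool_chains X J' F"
  by (auto simp: fun_eq_iff bool_chains_def)

lemma bool_bd_cong: "(\<And>S. S \<subseteq> X \<Longrightarrow> J S = J' S) \<Longrightarrow> bool_bd X J Fr num = bool_bd X J' Fr num"
  by (auto simp: fun_eq_iff bool_bd_def intro!: sum.cong)

lemma bool_chainsI: "(\<And>S. S \<subseteq> X \<Longrightarrow> int (card S) = k \<Longrightarrow> c S \<in> F (J S)) \<Longrightarrow>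
   (\<And>S. \<not> (S \<subseteq> X \<and> int (card S) = k) \<Longrightarrow> c S = 0) \<Longrightarrow> c \<in> bool_chains X J F k"
  unfolding bool_chains_def by blast

lemma bool_chains_vanish: "c \<in> bool_chains X J F k \<Longrightarrow> \<not> (S \<subseteq> X \<and> int (card S) = k) \<Longrightarrow> c S = 0"
  unfolding bool_chains_def by blast

lemma bool_bd_vanish: "\<not> (S \<subseteq> X \<and> int (card S) = k - 1) \<Longrightarrow> bool_bd X J Fr num k c S = 0"
  unfolding bool_bd_def by auto

lemma bool_bd_apply: "S \<subseteq> X \<Longrightarrow> int (card S) = k - 1 \<Longrightarrow>
  bool_bd X J Fr num k c S = (\<Sum>b\<in>X - S. sgn_term num S b (Fr (J (insert b S)) (J S) (c (insert b S))))"
  unfolding bool_bd_def by simp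

locale boolean_complex = sheaf +
  fixes num :: "'a::order \<Rightarrow> nat" and X :: "'a set" and J :: "'a set \<Rightarrow> 'a"
  assumes inj_num: "inj_on num X" and finite_X: "finite X"
    and J_in: "S \<subseteq> X \<Longrightarrow> J S \<in> L" and J_mono: "S \<subseteq> T \<Longrightarrow> T \<subseteq> X \<Longrightarrow> J S \<le> J T"
begin

abbreviation "Ch \<equiv> bool_chains X J F"
abbreviation "D \<equiv> bool_bd X J Fr num"

lemma finite_face: "T \<subseteq> X \<Longrightarrow> finite T"
  using finite_X finite_subset by auto

lemma chain_in: "c \<in> Ch k \<Longrightarrow> T \<subseteq> X \<Longrightarrow> c T \<in> F (J T)"
  unfolding bool_chains_def using F_zero J_in by (cases "int (card T) = k") auto

lemma J_insert: "b \<in> X \<Longrightarrow> S \<subseteq> X \<Longrightarrow> J S \<le> J (insert b S)"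
  using J_mono[of S "insert b S"] by auto

lemma Fr_J_insert_zero: "b \<in> X \<Longrightarrow> S \<subseteq> X \<Longrightarrow> Fr (J (insert b S)) (J S) 0 = 0"
  by (intro Fr_zero J_in J_insert) auto

lemma bd_term_in: "c \<in> Ch k \<Longrightarrow> S \<subseteq> X \<Longrightarrow> b \<in> X \<Longrightarrow>
  sgn_term num S b (Fr (J (insert b S)) (J S) (c (insert b S))) \<in> F (J S)"
  unfolding sgn_term_eq_signed by (intro F_signed Fr_in J_in J_insert chain_in) auto

lemma D_in: "c \<in> Ch k \<Longrightarrow> D k c \<in> Ch (k - 1)"
  by (rule bool_chainsI) (auto simp: bool_bd_def intro!: F_sum J_in bd_term_in)

lemma D_add:
  assumes x: "x \<in> Ch k" and y: "y \<in> Ch k"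
  shows "D k (x + y) = D k x + D k y"
proof (rule ext)
  fix S
  show "D k (x + y) S = (D k x + D k y) S"
  proof (cases "S \<subseteq> X \<and> int (card S) = k - 1")
    case True
    have "Fr (J (insert b S)) (J S) ((x + y) (insert b S)) =
        Fr (J (insert b S)) (J S) (x (insert b S)) + Fr (J (insert b S)) (J S) (y (insert b S))"
      if "b \<in> X - S" for b
      using True that by (auto intro!: Fr_add J_in J_insert chain_in x y)
    then show ?thesis
      using True by (simp add: bool_bd_apply sgn_term_eq_signed signed_add sum.distrib[symmetric])
  qed (simp add: bool_bd_vanish)
qed

lemma D_scale:
  assumes x: "x \<in> Ch k"
  shows "D k (scale_fun scale r x) = scale_fun scale r (D k x)"
proof (rule ext)
  fix S
  show "D k (scale_fun scale r x) S = scale_fun scale r (D k x) S"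
  proof (cases "S \<subseteq> X \<and> int (card S) = k - 1")
    case True
    have "Fr (J (insert b S)) (J S) (scale r (x (insert b S))) = scale r (Fr (J (insert b S)) (J S) (x (insert b S)))"
      if "b \<in> X - S" for b
      using True that by (auto intro!: Fr_scale J_in J_insert chain_in x)
    then show ?thesis
      using True by (simp add: bool_bd_apply scale_fun_def sgn_term_eq_signed scale_signed
          module.scale_sum_right[OF module])
  qed (simp add: bool_bd_vanish scale_fun_def module.scale_zero_right[OF module])
qed

text \<open>The terms of \<open>D (D c) S\<close> for the pairs \<open>(b, b')\<close> and \<open>(b', b)\<close> carry opposite signs.\<close>
lemma D_D_inner:
  assumes c: "c \<in> Ch k" and S: "S \<subseteq> X" "int (card S) = k - 2" and b: "b \<in> X - S"
  shows "sgn_term num S b (Fr (J (insert b S)) (J S) (D k c (insert b S))) =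
    (\<Sum>b'\<in>X - S - {b}. signed (count_below num S b + count_below num S b' + (if num b < num b' then 1 else 0))
       (Fr (J (insert b' (insert b S))) (J S) (c (insert b' (insert b S)))))"
proof -
  have fS: "finite S" using S finite_face by blast
  have bS: "insert b S \<subseteq> X" "int (card (insert b S)) = k - 1" using b S fS by auto
  have "Fr (J (insert b S)) (J S) (D k c (insert b S)) = (\<Sum>b'\<in>X - insert b S.
      Fr (J (insert b S)) (J S) (sgn_term num (insert b S) b'
        (Fr (J (insert b' (insert b S))) (J (insert b S)) (c (insert b' (insert b S))))))"
    unfolding bool_bd_apply[OF bS] using bS b by (intro Fr_sum J_in J_insert bd_term_in[OF c]) auto
  also have "\<dots> = (\<Sum>b'\<in>X - insert b S. signed (count_below num (insert b S) b')
      (Fr (J (insert b' (insert b S))) (J S) (c (insert b' (insert b S)))))"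
  proof (rule sum.cong[OF refl])
    fix b' assume b': "b' \<in> X - insert b S"
    have le: "J S \<le> J (insert b S)" "J (insert b S) \<le> J (insert b' (insert b S))"
      using b b' S by (auto intro: J_insert)
    have inL: "J S \<in> L" "J (insert b S) \<in> L" "J (insert b' (insert b S)) \<in> L"
      using b b' S by (auto intro!: J_in)
    have cv: "c (insert b' (insert b S)) \<in> F (J (insert b' (insert b S)))"
      using b b' S by (auto intro!: chain_in[OF c])
    show "Fr (J (insert b S)) (J S) (sgn_term num (insert b S) b'
        (Fr (J (insert b' (insert b S))) (J (insert b S)) (c (insert b' (insert b S))))) =
      signed (count_below num (insert b S) b') (Fr (J (insert b' (insert b S))) (J S) (c (insert b' (insert b S))))"
      unfolding sgn_term_eq_signed
      using Fr_signed[OF inL(1,2) le(1) Fr_in[OF inL(2,3) le(2) cv]] Fr_comp[OF inL le cv] by simp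
  qed
  finally have "sgn_term num S b (Fr (J (insert b S)) (J S) (D k c (insert b S))) =
    (\<Sum>b'\<in>X - S - {b}. signed (count_below num S b) (signed (count_below num (insert b S) b')
       (Fr (J (insert b' (insert b S))) (J S) (c (insert b' (insert b S))))))"
    by (simp only: sgn_term_eq_signed signed_sum Diff_insert[of X b S])
  also have "\<dots> = (\<Sum>b'\<in>X - S - {b}. signed (count_below num S b + count_below num S b' + (if num b < num b' then 1 else 0))
       (Fr (J (insert b' (insert b S))) (J S) (c (insert b' (insert b S)))))"
    using b fS by (intro sum.cong refl) (simp add: count_below_insert signed_plus[symmetric] add.assoc)
  finally show ?thesis .
qed

lemma D_D: "c \<in> Ch k \<Longrightarrow> D (k - 1) (D k c) = 0"
proof (rule ext)
  fix S assume c: "c \<in> Ch k"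
  show "D (k - 1) (D k c) S = 0 S"
  proof (cases "S \<subseteq> X \<and> int (card S) = k - 2")
    case True
    define G where "G b b' = signed (count_below num S b + count_below num S b' + (if num b < num b' then 1 else 0))
       (Fr (J (insert b' (insert b S))) (J S) (c (insert b' (insert b S))))" for b b'
    have "D (k - 1) (D k c) S = (\<Sum>b\<in>X - S. \<Sum>b'\<in>X - S - {b}. G b b')"
      using True D_D_inner[OF c] by (simp add: bool_bd_apply G_def)
    also have "\<dots> = 0"
    proof (rule sum_antisymmetric_offdiag)
      fix b b' assume "b \<in> X - S" "b' \<in> X - S" "b \<noteq> b'"
      then have "num b \<noteq> num b'" using inj_num by (auto dest: inj_onD)
      moreover have "insert b' (insert b S) = insert b (insert b' S)" by (rule insert_commute)
      ultimately show "G b b' = - G b' b"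
        by (cases "num b < num b'") (simp_all add: G_def signed_def add.commute)
    qed (simp add: finite_X)
    finally show ?thesis by simp
  qed (simp add: bool_bd_vanish)
qed

sublocale chain_complex scale Ch D
proof (rule chain_complex.intro)
  fix k x y r
  show "module scale" by (rule module)
  show "0 \<in> Ch k" using F_zero J_in by (auto simp: bool_chains_def)
  show "x \<in> Ch k \<Longrightarrow> y \<in> Ch k \<Longrightarrow> x + y \<in> Ch k" using F_add J_in by (auto simp: bool_chains_def)
  show "x \<in> Ch k \<Longrightarrow> - x \<in> Ch k" using F_uminus J_in by (auto simp: bool_chains_def)
  show "x \<in> Ch k \<Longrightarrow> scale_fun scale r x \<in> Ch k"
    using F_scale J_in module.scale_zero_right[OF module] by (auto simp: bool_chains_def scale_fun_def)
qed (simp_all add: D_in D_add D_scale D_D)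

end

context boolean_complex
begin

lemma boolean_complex_subset: "Y \<subseteq> X \<Longrightarrow> boolean_complex scale L F Fr num Y J"
  by unfold_locales (auto intro: inj_on_subset[OF inj_num] finite_subset[OF _ finite_X] J_in J_mono)

lemma bool_chains_subset:
  assumes "Y \<subseteq> X"
  shows "bool_chains Y J F k \<subseteq> Ch k"
proof
  fix c assume c: "c \<in> bool_chains Y J F k"
  show "c \<in> Ch k"
  proof (rule bool_chainsI)
    fix S assume "S \<subseteq> X" "int (card S) = k"
    then show "c S \<in> F (J S)"
      using c F_zero J_in by (cases "S \<subseteq> Y") (auto simp: bool_chains_def)
  next
    fix S assume "\<not> (S \<subseteq> X \<and> int (card S) = k)"
    then show "c S = 0" using assms bool_chains_vanish[OF c] by blast
  qed
qed

lemma bool_bd_subset: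
  assumes Y: "Y \<subseteq> X" and c: "c \<in> bool_chains Y J F k"
  shows "bool_bd Y J Fr num k c = D k c"
proof (rule ext)
  fix S
  have term_vanish: "sgn_term num S b (Fr (J (insert b S)) (J S) (c (insert b S))) = 0"
    if "S \<subseteq> X" "b \<in> X" "\<not> insert b S \<subseteq> Y" for b
  proof -
    have "c (insert b S) = 0" using that(3) by (intro bool_chains_vanish[OF c]) blast
    then show ?thesis using Fr_J_insert_zero[OF that(2,1)] by (simp add: sgn_term_def)
  qed
  show "bool_bd Y J Fr num k c S = D k c S"
  proof (cases "S \<subseteq> Y \<and> int (card S) = k - 1")
    case True
    then have SX: "S \<subseteq> X" using Y by blast
    have "D k c S = (\<Sum>b\<in>X - S. sgn_term num S b (Fr (J (insert b S)) (J S) (c (insert b S))))"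
      using True SX by (simp add: bool_bd_apply)
    also have "\<dots> = (\<Sum>b\<in>Y - S. sgn_term num S b (Fr (J (insert b S)) (J S) (c (insert b S))))"
      using Y SX finite_X term_vanish by (intro sum.mono_neutral_right) auto
    finally show ?thesis using True by (simp add: bool_bd_apply)
  next
    case False
    then show ?thesis
      using term_vanish by (auto simp: bool_bd_def intro!: sum.neutral)
  qed
qed

lemma subcomplex_cyc_bnd:
  assumes Y: "Y \<subseteq> X"
  shows "chain_complex.cyc (bool_chains Y J F) (bool_bd Y J Fr num) k \<subseteq> cyc k"
    and "chain_complex.bnd (bool_chains Y J F) (bool_bd Y J Fr num) k \<subseteq> bnd k"
proof -
  interpret Y: boolean_complex scale L F Fr num Y J by (rule boolean_complex_subset[OF Y])
  show "Y.cyc k \<subseteq> cyc k"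
    using bool_chains_subset[OF Y] bool_bd_subset[OF Y] by (auto simp: Y.cyc_def cyc_def)
  show "Y.bnd k \<subseteq> bnd k"
    using bool_chains_subset[OF Y] bool_bd_subset[OF Y] by (auto simp: Y.bnd_def bnd_def)
qed

lemma bool_chains_Diff_iff:
  assumes "x \<in> X"
  shows "c \<in> bool_chains (X - {x}) J F k \<longleftrightarrow> c \<in> Ch k \<and> (\<forall>T. x \<in> T \<longrightarrow> c T = 0)"
proof
  assume c: "c \<in> bool_chains (X - {x}) J F k"
  then show "c \<in> Ch k \<and> (\<forall>T. x \<in> T \<longrightarrow> c T = 0)"
    using bool_chains_subset[of "X - {x}"] bool_chains_vanish[OF c] by blast
next
  assume "c \<in> Ch k \<and> (\<forall>T. x \<in> T \<longrightarrow> c T = 0)"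
  then show "c \<in> bool_chains (X - {x}) J F k"
    by (auto simp: bool_chains_def)
qed

end

section \<open>Removing absorbed generators\<close>

definition absorbs :: "'a set \<Rightarrow> ('a set \<Rightarrow> 'a) \<Rightarrow> 'a \<Rightarrow> 'a \<Rightarrow> bool" where
  "absorbs X J y x \<longleftrightarrow> (\<forall>T. T \<subseteq> X \<longrightarrow> x \<in> T \<longrightarrow> J (insert y T) = J T)"

lemma absorbs_subset: "absorbs X J y x \<Longrightarrow> Y \<subseteq> X \<Longrightarrow> absorbs Y J y x"
  by (auto simp: absorbs_def)

locale absorbing_pair = boolean_complex +
  fixes x y
  assumes x_in: "x \<in> X" and y_in: "y \<in> X" and x_neq_y: "x \<noteq> y" and absorbs: "absorbs X J y x"
begin

sublocale rem: boolean_complex scale L F Fr num "X - {x}" J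
  by (rule boolean_complex_subset) blast

text \<open>Coning off from \<open>y\<close> the faces that contain \<open>x\<close>; as \<open>y\<close> does not change their joins,
  this is a chain homotopy contracting everything that involves \<open>x\<close>.\<close>
definition cone where
  "cone c = (\<lambda>T. if T \<subseteq> X \<and> x \<in> T \<and> y \<in> T then signed (count_below num (T - {y}) y) (c (T - {y})) else 0)"

lemma J_insert_y: "T \<subseteq> X \<Longrightarrow> x \<in> T \<Longrightarrow> J (insert y T) = J T"
  using absorbs by (simp add: absorbs_def)

lemma cone_in: assumes c: "c \<in> Ch k" shows "cone c \<in> Ch (k + 1)"
proof (rule bool_chainsI)
  fix T assume T: "T \<subseteq> X" "int (card T) = k + 1"
  show "cone c T \<in> F (J T)"
  proof (cases "x \<in> T \<and> y \<in> T")
    case True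
    have sub: "T - {y} \<subseteq> X" "insert y (T - {y}) = T" using T True by auto
    then have "J (T - {y}) = J T" using J_insert_y[of "T - {y}"] True x_neq_y by simp
    then show ?thesis using True T chain_in[OF c sub(1)] F_signed J_in by (simp add: cone_def)
  qed (use F_zero J_in T in \<open>auto simp: cone_def\<close>)
next
  fix T assume T: "\<not> (T \<subseteq> X \<and> int (card T) = k + 1)"
  show "cone c T = 0"
  proof (cases "T \<subseteq> X \<and> x \<in> T \<and> y \<in> T")
    case True
    then have "card T = Suc (card (T - {y}))" using card_Suc_Diff1 finite_face by metis
    then have "c (T - {y}) = 0" using T True bool_chains_vanish[OF c, of "T - {y}"] by auto
    then show ?thesis by (simp add: cone_def signed_zero)
  qed (auto simp: cone_def)
qed

lemma cone_vanish: "(\<And>T. x \<in> T \<Longrightarrow> w T = 0) \<Longrightarrow> cone w = 0"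
  using x_neq_y by (auto simp: cone_def fun_eq_iff signed_zero)

lemma cone_D_apex:
  assumes c: "c \<in> Ch k" and S: "S \<subseteq> X" "x \<in> S" "y \<notin> S" "int (card S) = k - 1"
  shows "cone (D k c) (insert y S) = c (insert y S) +
    (\<Sum>b\<in>X - insert y S. signed (count_below num S y) (sgn_term num S b (Fr (J (insert b S)) (J S) (c (insert b S)))))"
proof -
  have JS: "J (insert y S) = J S" using J_insert_y S by blast
  have "D k c S = sgn_term num S y (Fr (J (insert y S)) (J S) (c (insert y S))) +
      (\<Sum>b\<in>X - insert y S. sgn_term num S b (Fr (J (insert b S)) (J S) (c (insert b S))))"
    unfolding bool_bd_apply[OF S(1,4)] Diff_insert[of X y S]
    using S y_in finite_X by (intro sum.remove) auto
  moreover have "c (insert y S) \<in> F (J S)" using chain_in[OF c, of "insert y S"] S y_in JS by simp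
  then have "Fr (J S) (J S) (c (insert y S)) = c (insert y S)" using Fr_id J_in[OF S(1)] by blast
  ultimately show ?thesis
    using S y_in by (simp add: cone_def JS sgn_term_eq_signed signed_add signed_sum signed_signed)
qed

lemma D_cone_apex:
  assumes c: "c \<in> Ch k" and S: "S \<subseteq> X" "x \<in> S" "y \<notin> S" "int (card S) = k - 1"
  shows "D (k + 1) (cone c) (insert y S) = - (\<Sum>b\<in>X - insert y S.
    signed (count_below num S y) (sgn_term num S b (Fr (J (insert b S)) (J S) (c (insert b S)))))"
proof -
  have fS: "finite S" using S finite_face by blast
  have "D (k + 1) (cone c) (insert y S) = (\<Sum>b\<in>X - insert y S.
      sgn_term num (insert y S) b (Fr (J (insert b (insert y S))) (J (insert y S)) (cone c (insert b (insert y S)))))"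
    using S y_in fS by (simp add: bool_bd_apply)
  also have "\<dots> = (\<Sum>b\<in>X - insert y S. -
      signed (count_below num S y) (sgn_term num S b (Fr (J (insert b S)) (J S) (c (insert b S)))))"
  proof (rule sum.cong[OF refl])
    fix b assume b: "b \<in> X - insert y S"
    have J: "J (insert y S) = J S" "J (insert b (insert y S)) = J (insert b S)"
      using J_insert_y[of S] J_insert_y[of "insert b S"] S b by (auto simp: insert_commute)
    have cone_b: "cone c (insert b (insert y S)) = signed (count_below num (insert b S) y) (c (insert b S))"
    proof -
      have "insert b (insert y S) - {y} = insert b S" using b S by auto
      then show ?thesis using S b y_in by (simp add: cone_def)
    qed
    have "num b \<noteq> num y" using inj_num b y_in by (auto dest: inj_onD)
    then have sign: "signed (count_below num (insert y S) b) (signed (count_below num (insert b S) y) v) =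
        - signed (count_below num S y) (signed (count_below num S b) v)" for v :: "'m::ab_group_add"
      using b S fS by (cases "num y < num b") (auto simp: count_below_insert signed_def)
    show "sgn_term num (insert y S) b (Fr (J (insert b (insert y S))) (J (insert y S)) (cone c (insert b (insert y S)))) =
      - signed (count_below num S y) (sgn_term num S b (Fr (J (insert b S)) (J S) (c (insert b S))))"
      unfolding J cone_b sgn_term_eq_signed sign[symmetric]
      using b S by (subst Fr_signed) (auto intro!: J_in J_insert chain_in[OF c])
  qed
  finally show ?thesis by (simp add: sum_negf)
qed

lemma D_cone_no_apex:
  assumes c: "c \<in> Ch k" and T: "T \<subseteq> X" "x \<in> T" "y \<notin> T" "int (card T) = k"
  shows "D (k + 1) (cone c) T = c T"
proof -
  have "D (k + 1) (cone c) T = (\<Sum>b\<in>X - T.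
      sgn_term num T b (Fr (J (insert b T)) (J T) (cone c (insert b T))))"
    using T by (simp add: bool_bd_apply)
  also have "\<dots> = sgn_term num T y (Fr (J (insert y T)) (J T) (cone c (insert y T)))"
    using T y_in finite_X
    by (subst sum.mono_neutral_right[of _ "{y}"]) (auto simp: cone_def sgn_term_def Fr_J_insert_zero)
  also have "\<dots> = c T"
    using T y_in J_insert_y[OF T(1,2)] Fr_id[OF J_in F_signed[OF J_in chain_in[OF c]]]
    by (simp add: cone_def sgn_term_eq_signed signed_signed)
  finally show ?thesis .
qed

lemma cone_homotopy:
  assumes c: "c \<in> Ch k" and T: "T \<subseteq> X" "x \<in> T"
  shows "D (k + 1) (cone c) T + cone (D k c) T = c T"
proof (cases "int (card T) = k")
  case False
  have "cone (D k c) T = 0"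
  proof (cases "y \<in> T")
    case True
    then have "card T = Suc (card (T - {y}))" using card_Suc_Diff1 T(1) finite_face by metis
    then have "D k c (T - {y}) = 0" using False by (intro bool_bd_vanish) simp
    then show ?thesis by (simp add: cone_def signed_zero)
  qed (simp add: cone_def)
  moreover have "D (k + 1) (cone c) T = 0" "c T = 0"
    using False by (simp_all add: bool_bd_vanish bool_chains_vanish[OF c])
  ultimately show ?thesis by simp
next
  case True
  show ?thesis
  proof (cases "y \<in> T")
    case y: True
    have "card T = Suc (card (T - {y}))" using card_Suc_Diff1 T(1) y finite_face by metis
    then have S: "T - {y} \<subseteq> X" "x \<in> T - {y}" "y \<notin> T - {y}" "int (card (T - {y})) = k - 1"
      using T True x_neq_y by auto
    have "insert y (T - {y}) = T" using y by blast
    then show ?thesis using cone_D_apex[OF c S] D_cone_apex[OF c S] by simp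
  next
    case False
    then show ?thesis using D_cone_no_apex[OF c T False True] by (simp add: cone_def)
  qed
qed

lemma cyc_homologous_to_rem:
  assumes z: "z \<in> cyc k"
  shows "\<exists>z'\<in>rem.cyc k. z - z' \<in> bnd k"
proof -
  have zC: "z \<in> Ch k" and dz: "D k z = 0" using z by (auto simp: cyc_def)
  have hz: "cone z \<in> Ch (k + 1)" using cone_in[OF zC] .
  define z' where "z' = z - D (k + 1) (cone z)"
  have z'C: "z' \<in> Ch k" unfolding z'_def using zC D_in_Ch_succ[OF hz] by (rule diff_in_Ch)
  have "cone (D k z) = 0" using dz by (simp add: cone_vanish)
  then have "z' T = 0" if "x \<in> T" for T
  proof (cases "T \<subseteq> X")
    case True
    then show ?thesis using cone_homotopy[OF zC True that] \<open>cone (D k z) = 0\<close> by (simp add: z'_def)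
  qed (use bool_chains_vanish[OF z'C] in blast)
  then have z'Y: "z' \<in> bool_chains (X - {x}) J F k" using bool_chains_Diff_iff[OF x_in] z'C by blast
  have "D k z' = 0" unfolding z'_def using D_diff[OF zC D_in_Ch_succ[OF hz]] dz D_D_succ[OF hz] by simp
  then have "z' \<in> rem.cyc k" using z'Y bool_bd_subset[OF _ z'Y] by (auto simp: rem.cyc_def)
  moreover have "z - z' \<in> bnd k" unfolding z'_def bnd_def using hz by simp
  ultimately show ?thesis by blast
qed

lemma bnd_rem:
  assumes z: "z \<in> rem.cyc k" and zB: "z \<in> bnd k"
  shows "z \<in> rem.bnd k"
proof -
  have zY: "z \<in> bool_chains (X - {x}) J F k" using z by (simp add: rem.cyc_def)
  obtain c where c: "c \<in> Ch (k + 1)" "z = D (k + 1) c" using zB by (auto simp: bnd_def)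
  have hc: "cone c \<in> Ch (k + 1 + 1)" using cone_in[OF c(1)] .
  define c' where "c' = c - D (k + 1 + 1) (cone c)"
  have c'C: "c' \<in> Ch (k + 1)" unfolding c'_def using c(1) D_in_Ch_succ[OF hc] by (rule diff_in_Ch)
  have "cone z = 0" using zY bool_chains_Diff_iff[OF x_in] cone_vanish by blast
  then have "c' T = 0" if "x \<in> T" for T
  proof (cases "T \<subseteq> X")
    case True
    then show ?thesis using cone_homotopy[OF c(1) True that] \<open>cone z = 0\<close> c(2) by (simp add: c'_def)
  qed (use bool_chains_vanish[OF c'C] in blast)
  then have c'Y: "c' \<in> bool_chains (X - {x}) J F (k + 1)" using bool_chains_Diff_iff[OF x_in] c'C by blast
  have "D (k + 1) c' = z" unfolding c'_def using D_diff[OF c(1) D_in_Ch_succ[OF hc]] c(2) D_D_succ[OF hc] by simp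
  then have "bool_bd (X - {x}) J Fr num (k + 1) c' = z" using bool_bd_subset[OF _ c'Y] by auto
  then show ?thesis using c'Y unfolding rem.bnd_def by force
qed

lemma quasi_iso_incl_rem: "quasi_iso_incl (bool_chains (X - {x}) J F) (bool_bd (X - {x}) J Fr num) Ch D"
  unfolding quasi_iso_incl_def
  using subcomplex_cyc_bnd[of "X - {x}"] cyc_homologous_to_rem bnd_rem by blast

end

lemma quasi_iso_incl_absorbed:
  assumes "boolean_complex scale L F Fr num X J" and "Y \<subseteq> X" and "\<forall>x\<in>X - Y. \<exists>y\<in>Y. absorbs X J y x"
  shows "quasi_iso_incl (bool_chains Y J F) (bool_bd Y J Fr num) (bool_chains X J F) (bool_bd X J Fr num)"
  using assms
proof (induction "card (X - Y)" arbitrary: X)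
  case 0
  interpret boolean_complex scale L F Fr num X J by (rule "0.prems"(1))
  have "X = Y" using "0" "0.prems"(2) finite_X by auto
  then show ?case using quasi_iso_incl_refl chain_complex_axioms by blast
next
  case (Suc n)
  interpret boolean_complex scale L F Fr num X J by (rule Suc.prems(1))
  obtain x where x: "x \<in> X - Y" using Suc.hyps(2) by (metis card.empty ex_in_conv nat.distinct(1))
  obtain y where y: "y \<in> Y" "absorbs X J y x" using Suc.prems(3) x by blast
  interpret absorbing_pair scale L F Fr num X J x y
    using x y Suc.prems(2) by unfold_locales auto
  have "quasi_iso_incl (bool_chains Y J F) (bool_bd Y J Fr num) (bool_chains (X - {x}) J F) (bool_bd (X - {x}) J Fr num)"
  proof (rule Suc.hyps(1))
    show "n = card (X - {x} - Y)" using Suc.hyps(2) x finite_X by (simp add: Diff_insert2[symmetric] insert_commute)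
    show "boolean_complex scale L F Fr num (X - {x}) J" by (rule rem.boolean_complex_axioms)
    show "Y \<subseteq> X - {x}" using Suc.prems(2) x by blast
    show "\<forall>x'\<in>X - {x} - Y. \<exists>y\<in>Y. absorbs (X - {x}) J y x'"
      using Suc.prems(3) absorbs_subset[of X J _ _ "X - {x}"] by blast
  qed
  then show ?case using quasi_iso_incl_trans chain_complex_axioms quasi_iso_incl_rem by blast
qed

section \<open>The link of a generator\<close>

context boolean_complex
begin

text \<open>The link of a generator \<open>a\<close> is the Boolean complex on \<open>X - {a}\<close> with stalks at
  \<open>J (insert a T)\<close>. Up to the sign making it a chain map, \<open>link_proj a\<close> reads off the faces
  through \<open>a\<close>, and \<open>link_lift a\<close> is its degreewise section.\<close>
definition link_proj where
  "link_proj a c = (\<lambda>T. if T \<subseteq> X - {a} then signed (count_above num a T) (c (insert a T)) else 0)"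

definition link_lift where
  "link_lift a w = (\<lambda>S. if a \<in> S \<and> S \<subseteq> X then signed (count_above num a (S - {a})) (w (S - {a})) else 0)"

lemma boolean_complex_link: "a \<in> X \<Longrightarrow> boolean_complex scale L F Fr num (X - {a}) (\<lambda>T. J (insert a T))"
  by unfold_locales (auto intro: inj_on_subset[OF inj_num] finite_subset[OF _ finite_X] J_in J_mono)

lemma card_insert_face: "T \<subseteq> X - {a} \<Longrightarrow> card (insert a T) = Suc (card T)"
  using finite_face[of T] by (simp add: subset_Diff_insert)

lemma link_proj_in:
  assumes a: "a \<in> X" and c: "c \<in> Ch k"
  shows "link_proj a c \<in> bool_chains (X - {a}) (\<lambda>T. J (insert a T)) F (k - 1)"
proof (rule bool_chainsI)
  fix T assume T: "T \<subseteq> X - {a}" "int (card T) = k - 1"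
  have "c (insert a T) \<in> F (J (insert a T))" using T a by (intro chain_in[OF c]) auto
  then show "link_proj a c T \<in> F (J (insert a T))"
    using T F_signed J_in[of "insert a T"] a by (auto simp: link_proj_def)
next
  fix T assume T: "\<not> (T \<subseteq> X - {a} \<and> int (card T) = k - 1)"
  show "link_proj a c T = 0"
  proof (cases "T \<subseteq> X - {a}")
    case True
    then have "c (insert a T) = 0" using T card_insert_face by (intro bool_chains_vanish[OF c]) auto
    then show ?thesis by (simp add: link_proj_def signed_zero)
  qed (simp add: link_proj_def)
qed

lemma link_lift_in:
  assumes a: "a \<in> X" and w: "w \<in> bool_chains (X - {a}) (\<lambda>T. J (insert a T)) F k"
  shows "link_lift a w \<in> Ch (k + 1)"
proof (rule bool_chainsI)
  interpret C: boolean_complex scale L F Fr num "X - {a}" "\<lambda>T. J (insert a T)"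
    by (rule boolean_complex_link[OF a])
  fix S assume S: "S \<subseteq> X" "int (card S) = k + 1"
  show "link_lift a w S \<in> F (J S)"
  proof (cases "a \<in> S")
    case True
    then have "insert a (S - {a}) = S" by auto
    moreover have "w (S - {a}) \<in> F (J (insert a (S - {a})))"
      using S by (intro C.chain_in[OF w]) auto
    ultimately show ?thesis using True S F_signed J_in by (simp add: link_lift_def)
  qed (use F_zero J_in S in \<open>simp add: link_lift_def\<close>)
next
  fix S assume S: "\<not> (S \<subseteq> X \<and> int (card S) = k + 1)"
  show "link_lift a w S = 0"
  proof (cases "a \<in> S \<and> S \<subseteq> X")
    case True
    then have "card S = Suc (card (S - {a}))" using card_Suc_Diff1 finite_face by metis
    then have "w (S - {a}) = 0" using S True by (intro bool_chains_vanish[OF w]) auto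
    then show ?thesis by (simp add: link_lift_def signed_zero)
  qed (auto simp: link_lift_def)
qed

lemma link_proj_lift:
  assumes a: "a \<in> X" and w: "w \<in> bool_chains (X - {a}) (\<lambda>T. J (insert a T)) F k"
  shows "link_proj a (link_lift a w) = w"
proof (rule ext)
  fix T
  show "link_proj a (link_lift a w) T = w T"
  proof (cases "T \<subseteq> X - {a}")
    case True
    then have "insert a T - {a} = T" "insert a T \<subseteq> X" using a by auto
    then show ?thesis using True by (simp add: link_proj_def link_lift_def signed_signed)
  next
    case False
    then show ?thesis using bool_chains_vanish[OF w] by (simp add: link_proj_def)
  qed
qed

lemma link_proj_D_term:
  assumes a: "a \<in> X" and c: "c \<in> Ch k" and T: "T \<subseteq> X - {a}" and b: "b \<in> X - {a} - T"
  shows "signed (count_above num a T) (sgn_term num (insert a T) b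
      (Fr (J (insert b (insert a T))) (J (insert a T)) (c (insert b (insert a T))))) =
    sgn_term num T b (Fr (J (insert a (insert b T))) (J (insert a T)) (link_proj a c (insert b T)))"
proof -
  have fT: "finite T" and aT: "a \<notin> T" using T finite_face by auto
  have bT: "b \<notin> T" "insert b T \<subseteq> X - {a}" using b T by auto
  have inL: "J (insert a T) \<in> L" "J (insert a (insert b T)) \<in> L" using a b T by (auto intro!: J_in)
  have le: "J (insert a T) \<le> J (insert a (insert b T))" using a b T by (intro J_mono) auto
  have cv: "c (insert a (insert b T)) \<in> F (J (insert a (insert b T)))"
    using a b T by (intro chain_in[OF c]) auto
  have "link_proj a c (insert b T) = signed (count_above num a (insert b T)) (c (insert a (insert b T)))"
    using bT by (simp add: link_proj_def)
  then show ?thesis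
    unfolding sgn_term_eq_signed using Fr_signed[OF inL le cv] fT aT bT(1)
    by (simp add: count_below_insert count_above_insert insert_commute signed_plus[symmetric] ac_simps)
qed

lemma link_proj_D:
  assumes a: "a \<in> X" and c: "c \<in> Ch k"
  shows "link_proj a (D k c) = bool_bd (X - {a}) (\<lambda>T. J (insert a T)) Fr num (k - 1) (link_proj a c)"
proof (rule ext)
  fix T
  show "link_proj a (D k c) T = bool_bd (X - {a}) (\<lambda>T. J (insert a T)) Fr num (k - 1) (link_proj a c) T"
  proof (cases "T \<subseteq> X - {a} \<and> int (card T) = k - 1 - 1")
    case True
    have aT: "insert a T \<subseteq> X" "int (card (insert a T)) = k - 1" "X - insert a T = X - {a} - T"
      using True a card_insert_face by auto
    have "link_proj a (D k c) T = signed (count_above num a T) (D k c (insert a T))"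
      using True by (simp add: link_proj_def)
    also have "\<dots> = (\<Sum>b\<in>X - {a} - T. signed (count_above num a T) (sgn_term num (insert a T) b
        (Fr (J (insert b (insert a T))) (J (insert a T)) (c (insert b (insert a T))))))"
      using aT by (simp add: bool_bd_apply signed_sum)
    also have "\<dots> = bool_bd (X - {a}) (\<lambda>T. J (insert a T)) Fr num (k - 1) (link_proj a c) T"
      using True link_proj_D_term[OF a c] by (simp add: bool_bd_apply)
    finally show ?thesis .
  next
    case False
    have "link_proj a (D k c) T = 0"
    proof (cases "T \<subseteq> X - {a}")
      case True
      then have "D k c (insert a T) = 0" using False card_insert_face by (intro bool_bd_vanish) auto
      then show ?thesis using True by (simp add: link_proj_def signed_zero)
    qed (simp add: link_proj_def)
    then show ?thesis using False by (simp add: bool_bd_vanish)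
  qed
qed

lemma link_proj_eq_0_iff:
  assumes a: "a \<in> X" and c: "c \<in> Ch k"
  shows "link_proj a c = 0 \<longleftrightarrow> c \<in> bool_chains (X - {a}) J F k"
proof -
  have "link_proj a c = 0 \<longleftrightarrow> (\<forall>T. a \<in> T \<longrightarrow> c T = 0)"
  proof
    assume p0: "link_proj a c = 0"
    show "\<forall>T. a \<in> T \<longrightarrow> c T = 0"
    proof (intro allI impI)
      fix T assume aT: "a \<in> T"
      show "c T = 0"
      proof (cases "T \<subseteq> X")
        case True
        then have "T - {a} \<subseteq> X - {a}" by blast
        then have "signed (count_above num a (T - {a})) (c (insert a (T - {a}))) = 0"
          using fun_cong[OF p0, of "T - {a}"] by (simp add: link_proj_def)
        then show ?thesis using aT by (simp add: signed_eq_0_iff insert_absorb)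
      qed (use bool_chains_vanish[OF c] in blast)
    qed
  qed (auto simp: link_proj_def fun_eq_iff signed_zero)
  then show ?thesis using bool_chains_Diff_iff[OF a] c by blast
qed

theorem short_exact_link:
  assumes a: "a \<in> X"
  shows "short_exact scale (bool_chains (X - {a}) J F) (bool_bd (X - {a}) J Fr num) Ch D
    (bool_chains (X - {a}) (\<lambda>T. J (insert a T)) F) (bool_bd (X - {a}) (\<lambda>T. J (insert a T)) Fr num)
    (link_proj a) (link_lift a)"
proof -
  interpret A: boolean_complex scale L F Fr num "X - {a}" J by (rule boolean_complex_subset) auto
  interpret C: boolean_complex scale L F Fr num "X - {a}" "\<lambda>T. J (insert a T)"
    by (rule boolean_complex_link[OF a])
  show ?thesis
  proof (unfold_locales)
    fix k x y r w
    show "A.Ch k \<subseteq> Ch k" by (rule bool_chains_subset) auto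
    show "x \<in> A.Ch k \<Longrightarrow> A.D k x = D k x" by (rule bool_bd_subset) auto
    show "x \<in> Ch k \<Longrightarrow> link_proj a x \<in> C.Ch (k - 1)" by (rule link_proj_in[OF a])
    show "w \<in> C.Ch k \<Longrightarrow> link_lift a w \<in> Ch (k + 1)" by (rule link_lift_in[OF a])
    show "w \<in> C.Ch k \<Longrightarrow> link_proj a (link_lift a w) = w" by (rule link_proj_lift[OF a])
    show "link_proj a (x + y) = link_proj a x + link_proj a y"
      by (auto simp: link_proj_def fun_eq_iff signed_add)
    show "link_lift a (x + y) = link_lift a x + link_lift a y"
      by (auto simp: link_lift_def fun_eq_iff signed_add)
    show "link_proj a (scale_fun scale r x) = scale_fun scale r (link_proj a x)"
      by (auto simp: link_proj_def fun_eq_iff scale_fun_def scale_signed module.scale_zero_right[OF module])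
    show "link_lift a (scale_fun scale r x) = scale_fun scale r (link_lift a x)"
      by (auto simp: link_lift_def fun_eq_iff scale_fun_def scale_signed module.scale_zero_right[OF module])
    show "x \<in> Ch k \<Longrightarrow> link_proj a (D k x) = C.D (k - 1) (link_proj a x)" by (rule link_proj_D[OF a])
    show "x \<in> Ch k \<Longrightarrow> link_proj a x = 0 \<longleftrightarrow> x \<in> A.Ch k" by (rule link_proj_eq_0_iff[OF a])
  qed
qed

end

section \<open>Joins, deletion and restriction\<close>

lemma lub_in_unique: "lub_in M S x \<Longrightarrow> lub_in M S y \<Longrightarrow> x = y"
  unfolding lub_in_def by (meson order_antisym)

lemma bjoin_eqI: "lub_in M S x \<Longrightarrow> bjoin M S = x"
  unfolding bjoin_def using lub_in_unique by blast

lemma glb_in_exists: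
  assumes lat: "lattice_on L" and S: "S \<subseteq> L" "S \<noteq> {}"
  shows "\<exists>g. glb_in L S g"
proof -
  have "finite S" using lat S finite_subset unfolding lattice_on_def by blast
  then show ?thesis using S(2,1)
  proof (induction S rule: finite_ne_induct)
    case (singleton s) then show ?case by (intro exI[of _ s]) (auto simp: glb_in_def)
  next
    case (insert s S)
    obtain g where g: "glb_in L S g" using insert by auto
    have "s \<in> L" "g \<in> L" using insert g by (auto simp: glb_in_def)
    then obtain h where h: "glb_in L {s, g} h" using lat unfolding lattice_on_def by blast
    have "glb_in L (insert s S) h" using g h unfolding glb_in_def by (auto intro: order_trans)
    then show ?case by blast
  qed
qed

lemma lub_in_exists:
  assumes lat: "lattice_on L" and S: "S \<subseteq> L"
  shows "\<exists>x. lub_in L S x"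
proof (cases "S = {}")
  case True
  have "L \<noteq> {}" using lat by (simp add: lattice_on_def)
  then obtain g where "glb_in L L g" using glb_in_exists[OF lat] by blast
  then have "lub_in L {} g" by (auto simp: glb_in_def lub_in_def)
  then show ?thesis using True by blast
next
  case False
  have "finite S" using lat S finite_subset unfolding lattice_on_def by blast
  then show ?thesis using False S
  proof (induction S rule: finite_ne_induct)
    case (singleton s) then show ?case by (intro exI[of _ s]) (auto simp: lub_in_def)
  next
    case (insert s S)
    obtain g where g: "lub_in L S g" using insert by auto
    have "s \<in> L" "g \<in> L" using insert g by (auto simp: lub_in_def)
    then obtain h where h: "lub_in L {s, g} h" using lat unfolding lattice_on_def by blast
    have "lub_in L (insert s S) h" using g h unfolding lub_in_def by (auto intro: order_trans)
    then show ?case by blast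
  qed
qed

context
  fixes L :: "'a::order set"
  assumes lat: "lattice_on L"
begin

lemma lub_in_bjoin: "S \<subseteq> L \<Longrightarrow> lub_in L S (bjoin L S)"
  using lub_in_exists[OF lat] bjoin_eqI by metis

lemma bjoin_in: "S \<subseteq> L \<Longrightarrow> bjoin L S \<in> L"
  using lub_in_bjoin by (auto simp: lub_in_def)

lemma bjoin_upper: "S \<subseteq> L \<Longrightarrow> s \<in> S \<Longrightarrow> s \<le> bjoin L S"
  using lub_in_bjoin by (auto simp: lub_in_def)

lemma bjoin_least: "S \<subseteq> L \<Longrightarrow> u \<in> L \<Longrightarrow> (\<And>s. s \<in> S \<Longrightarrow> s \<le> u) \<Longrightarrow> bjoin L S \<le> u"
  using lub_in_bjoin unfolding lub_in_def by blast

lemma bjoin_mono: "T \<subseteq> L \<Longrightarrow> S \<subseteq> T \<Longrightarrow> bjoin L S \<le> bjoin L T"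
  by (rule bjoin_least) (auto intro: bjoin_in bjoin_upper)

lemma bjoin_insert_absorb:
  assumes "S \<subseteq> L" "y \<in> L" "y \<le> bjoin L S"
  shows "bjoin L (insert y S) = bjoin L S"
proof (rule order_antisym)
  show "bjoin L (insert y S) \<le> bjoin L S"
    using assms by (intro bjoin_least) (auto intro: bjoin_in bjoin_upper)
  show "bjoin L S \<le> bjoin L (insert y S)"
    using assms by (intro bjoin_mono) auto
qed

end

lemma atoms_subset: "atoms M \<subseteq> M"
  by (auto simp: atoms_def)

lemma atoms_covers: "a \<in> atoms M \<Longrightarrow> covers_in M (bjoin M {}) a"
  by (auto simp: atoms_def)

lemma bjoin_deletion:
  assumes lat: "lattice_on L" and S: "S \<subseteq> atoms L - {a}"
  shows "bjoin (deletion L a) S = bjoin L S"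
proof (rule bjoin_eqI)
  have SL: "S \<subseteq> L" using S atoms_subset by blast
  have "bjoin L S \<in> deletion L a"
    unfolding deletion_def using lub_in_bjoin[OF lat SL] bjoin_in[OF lat SL] S by blast
  then show "lub_in (deletion L a) S (bjoin L S)"
    using lub_in_bjoin[OF lat SL] by (auto simp: lub_in_def deletion_def)
qed

lemma atoms_deletion:
  assumes lat: "lattice_on L" and a: "a \<in> atoms L"
  shows "atoms (deletion L a) = atoms L - {a}"
proof -
  let ?D = "deletion L a" and ?z = "bjoin L {}"
  have bot: "bjoin ?D {} = ?z" using bjoin_deletion[OF lat, of "{}"] by simp
  show ?thesis
  proof (intro set_eqI iffI)
    fix x assume "x \<in> atoms ?D"
    then have c: "covers_in ?D ?z x" using bot by (simp add: atoms_def)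
    then have xD: "x \<in> ?D" and zx: "?z < x" by (auto simp: covers_in_def)
    obtain S where S: "S \<subseteq> atoms L - {a}" "lub_in L S x" using xD by (auto simp: deletion_def)
    have "S \<noteq> {}" using S(2) zx bjoin_eqI by force
    then obtain b where b: "b \<in> S" by blast
    have bA: "b \<in> atoms L" "b \<noteq> a" using S b by auto
    have bx: "b \<le> x" using S(2) b by (auto simp: lub_in_def)
    have bD: "b \<in> ?D"
      unfolding deletion_def using bA atoms_subset[of L]
      by (intro CollectI conjI exI[of _ "{b}"]) (auto simp: lub_in_def)
    have "?z < b" using atoms_covers[OF bA(1)] by (auto simp: covers_in_def)
    then have "\<not> b < x" using c bD unfolding covers_in_def by blast
    then show "x \<in> atoms L - {a}" using bA bx by (simp add: order.order_iff_strict)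
  next
    fix x assume x: "x \<in> atoms L - {a}"
    have xD: "x \<in> ?D" unfolding deletion_def using x atoms_subset[of L]
      by (intro CollectI conjI exI[of _ "{x}"]) (auto simp: lub_in_def)
    have "?z \<in> ?D" unfolding deletion_def using lub_in_bjoin[OF lat, of "{}"] bjoin_in[OF lat, of "{}"] by blast
    moreover have "covers_in L ?z x" using x atoms_covers by auto
    ultimately have "covers_in ?D ?z x" using xD unfolding covers_in_def deletion_def by blast
    then show "x \<in> atoms ?D" using xD bot by (simp add: atoms_def)
  qed
qed

lemma bjoin_restriction:
  assumes lat: "lattice_on L" and aL: "a \<in> L" and U: "U \<subseteq> restriction L a"
  shows "bjoin (restriction L a) U = bjoin L (insert a U)"
proof (rule bjoin_eqI)
  have UL: "insert a U \<subseteq> L" using U aL by (auto simp: restriction_def)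
  have "bjoin L (insert a U) \<in> restriction L a"
    using bjoin_upper[OF lat UL] bjoin_in[OF lat UL] by (simp add: restriction_def)
  moreover have "bjoin L (insert a U) \<le> y" if "y \<in> restriction L a" "\<forall>s\<in>U. s \<le> y" for y
    using that by (intro bjoin_least[OF lat UL]) (auto simp: restriction_def)
  ultimately show "lub_in (restriction L a) U (bjoin L (insert a U))"
    using bjoin_upper[OF lat UL] by (auto simp: lub_in_def)
qed

lemma atoms_restriction:
  assumes lat: "lattice_on L" and aL: "a \<in> L"
  shows "atoms (restriction L a) = {x. covers_in L a x}"
proof -
  let ?R = "restriction L a"
  have "lub_in ?R {} a" using aL by (auto simp: lub_in_def restriction_def)
  then have bot: "bjoin ?R {} = a" by (rule bjoin_eqI)
  have "covers_in ?R a x \<longleftrightarrow> covers_in L a x" for x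
    using aL unfolding covers_in_def restriction_def by (auto intro: less_imp_le order.strict_trans)
  then show ?thesis
    using bot by (auto simp: atoms_def covers_in_def restriction_def)
qed

lemma rank_strict_mono:
  assumes lat: "lattice_on L" and cov: "\<forall>x y. covers_in L x y \<longrightarrow> rk y = rk x + (1::nat)"
  shows "x \<in> L \<Longrightarrow> y \<in> L \<Longrightarrow> x < y \<Longrightarrow> rk x < rk y"
proof (induction "card {w \<in> L. x < w \<and> w \<le> y}" arbitrary: x rule: less_induct)
  case less
  have fW: "finite {w \<in> L. x < w \<and> w \<le> y}" using lat by (simp add: lattice_on_def)
  have "y \<in> {w \<in> L. x < w \<and> w \<le> y}" using less by simp
  then obtain z where z: "z \<in> {w \<in> L. x < w \<and> w \<le> y}"
    and zmin: "\<forall>b\<in>{w \<in> L. x < w \<and> w \<le> y}. b \<le> z \<longrightarrow> z = b"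
    using finite_has_minimal2[OF fW] by blast
  have "covers_in L x z"
    unfolding covers_in_def using z zmin less.prems by (auto intro: order.strict_trans2)
  then have rz: "rk z = rk x + 1" using cov by blast
  show ?case
  proof (cases "z = y")
    case False
    then have zy: "z < y" using z by auto
    have "{w \<in> L. z < w \<and> w \<le> y} \<subset> {w \<in> L. x < w \<and> w \<le> y}"
      using z by (auto intro: order.strict_trans)
    then have "card {w \<in> L. z < w \<and> w \<le> y} < card {w \<in> L. x < w \<and> w \<le> y}"
      using psubset_card_mono[OF fW] by blast
    then have "rk z < rk y" using less.hyps z less.prems zy by blast
    then show ?thesis using rz by simp
  qed (use rz in simp)
qed

context
  fixes L :: "'a::order set" and a :: 'a
  assumes geo: "geometric_lattice L" and a: "a \<in> atoms L"
begin

lemma geometric_lattice_on: "lattice_on L"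
  using geo by (simp add: geometric_lattice_def)

lemma atom_below_join:
  assumes b: "b \<in> atoms L" "b \<noteq> a"
  shows "a < bjoin L {a, b}" and "b \<le> bjoin L {a, b}" and "bjoin L {a, b} \<in> L"
proof -
  have ab: "{a, b} \<subseteq> L" using a b atoms_subset by blast
  show "b \<le> bjoin L {a, b}" "bjoin L {a, b} \<in> L"
    using bjoin_upper[OF geometric_lattice_on ab] bjoin_in[OF geometric_lattice_on ab] by simp_all
  have "a \<le> bjoin L {a, b}" using bjoin_upper[OF geometric_lattice_on ab] by simp
  moreover have "a \<noteq> bjoin L {a, b}"
  proof
    assume "a = bjoin L {a, b}"
    then have "b \<le> a" using bjoin_upper[OF geometric_lattice_on ab] by simp
    moreover have "bjoin L {} < b" using atoms_covers[OF b(1)] by (auto simp: covers_in_def)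
    ultimately show False using atoms_covers[OF a] b ab unfolding covers_in_def
      by (auto simp: order.order_iff_strict)
  qed
  ultimately show "a < bjoin L {a, b}" by simp
qed

text \<open>By semimodularity the join of two atoms has rank two.\<close>
lemma join_atoms_covers:
  assumes b: "b \<in> atoms L" "b \<noteq> a"
  shows "covers_in L a (bjoin L {a, b})"
proof -
  obtain rk :: "'a \<Rightarrow> nat" where rk0: "rk (bjoin L {}) = 0"
    and cov: "\<forall>x y. covers_in L x y \<longrightarrow> rk y = rk x + 1"
    and sm: "\<forall>x\<in>L. \<forall>y\<in>L. rk (bjoin L {x, y}) + rk (bmeet L {x, y}) \<le> rk x + rk y"
    using geo unfolding geometric_lattice_def by blast
  have aL: "a \<in> L" and bL: "b \<in> L" using a b atoms_subset by blast+
  have r1: "rk a = 1" "rk b = 1" using cov atoms_covers[OF a] atoms_covers[OF b(1)] rk0 by auto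
  then have r2: "rk (bjoin L {a, b}) \<le> 2" using sm aL bL by fastforce
  have "\<not> (a < w \<and> w < bjoin L {a, b})" if "w \<in> L" for w
    using rank_strict_mono[OF geometric_lattice_on cov] that aL atom_below_join(3)[OF b] r1 r2
    by (metis Suc_1 Suc_le_eq le_less_trans less_irrefl_nat plus_1_eq_Suc)
  then show ?thesis using atom_below_join[OF b] aL unfolding covers_in_def by blast
qed

lemma cover_eq_join_atom:
  assumes l: "covers_in L a l"
  shows "\<exists>b\<in>atoms L - {a}. bjoin L {a, b} = l"
proof -
  have lL: "l \<in> L" and al: "a < l" and aL: "a \<in> L" using l by (auto simp: covers_in_def)
  obtain S where S: "S \<subseteq> atoms L" "lub_in L S l" using geo lL by (auto simp: geometric_lattice_def)
  have "\<exists>b\<in>S. b \<noteq> a"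
  proof (rule ccontr)
    assume "\<not> (\<exists>b\<in>S. b \<noteq> a)"
    then have "l \<le> a" using S(2) aL by (auto simp: lub_in_def)
    then show False using al by simp
  qed
  then obtain b where b: "b \<in> S" "b \<noteq> a" by blast
  have bA: "b \<in> atoms L" using S b by blast
  have "b \<le> l" using S(2) b by (auto simp: lub_in_def)
  then have "bjoin L {a, b} \<le> l" using al aL bA atoms_subset lL
    by (intro bjoin_least[OF geometric_lattice_on]) auto
  then have "bjoin L {a, b} = l"
    using l atom_below_join[OF bA b(2)] unfolding covers_in_def by (auto simp: order.order_iff_strict)
  then show ?thesis using bA b by blast
qed

end

section \<open>The deletion-restriction sequence\<close>

lemma boundaries_HC_eq:
  assumes "boolean_complex scale L F Fr num X J"
    and "chains M F = bool_chains X J F" and "bd M Fr num = bool_bd X J Fr num"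
  shows "boundaries M F Fr num = chain_complex.bnd (bool_chains X J F) (bool_bd X J Fr num)"
    and "HC M F Fr num = chain_complex.homology (bool_chains X J F) (bool_bd X J Fr num)"
proof -
  interpret boolean_complex scale L F Fr num X J by (rule assms(1))
  show "boundaries M F Fr num = bnd"
    by (simp add: fun_eq_iff boundaries_def bnd_def assms(2,3))
  show "HC M F Fr num = homology"
    by (simp add: fun_eq_iff HC_def homology_def cls_def cyc_def bnd_def cycles_def boundaries_def
        plus_fun_def zero_fun_def assms(2,3))
qed

lemma boolean_complex_join:
  assumes lat: "lattice_on L" and "module scale" "sheaf_on scale L F Fr" "inj_on num L"
    and X: "X \<subseteq> L" and a: "a \<in> L"
  shows "boolean_complex scale L F Fr num X (\<lambda>T. bjoin L (insert a T))"
proof (intro boolean_complex.intro sheaf.intro boolean_complex_axioms.intro)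
  show "inj_on num X" using assms(4) X by (rule inj_on_subset)
  show "finite X" using lat X finite_subset by (auto simp: lattice_on_def)
  fix S T
  show "S \<subseteq> X \<Longrightarrow> bjoin L (insert a S) \<in> L" using X a by (intro bjoin_in[OF lat]) auto
  show "S \<subseteq> T \<Longrightarrow> T \<subseteq> X \<Longrightarrow> bjoin L (insert a S) \<le> bjoin L (insert a T)"
    using X a by (intro bjoin_mono[OF lat]) auto
qed (rule assms(2,3))+

text \<open>Joining with the bottom element changes nothing.\<close>
lemma boolean_complex_atoms:
  assumes lat: "lattice_on L" and "module scale" "sheaf_on scale L F Fr" "inj_on num L"
  shows "boolean_complex scale L F Fr num (atoms L) (bjoin L)"
proof -
  have "bjoin L (insert (bjoin L {}) T) = bjoin L T" if "T \<subseteq> atoms L" for T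
  proof -
    have "T \<subseteq> L" using that atoms_subset by blast
    then show ?thesis using bjoin_insert_absorb[OF lat] bjoin_in[OF lat] bjoin_mono[OF lat] by simp
  qed
  moreover have "boolean_complex scale L F Fr num (atoms L) (\<lambda>T. bjoin L (insert (bjoin L {}) T))"
    using assms atoms_subset bjoin_in[OF lat, of "{}"] by (intro boolean_complex_join) auto
  ultimately show ?thesis
    unfolding boolean_complex_def boolean_complex_axioms_def by simp
qed

lemma chains_deletion:
  assumes lat: "lattice_on L" and a: "a \<in> atoms L"
  shows "chains (deletion L a) F = bool_chains (atoms L - {a}) (bjoin L) F"
    and "bd (deletion L a) Fr num = bool_bd (atoms L - {a}) (bjoin L) Fr num"
  unfolding chains_eq_bool_chains bd_eq_bool_bd atoms_deletion[OF lat a]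
  using bjoin_deletion[OF lat] by (auto intro: bool_chains_cong bool_bd_cong)

lemma chains_restriction:
  assumes lat: "lattice_on L" and a: "a \<in> L"
  shows "chains (restriction L a) F = bool_chains {x. covers_in L a x} (\<lambda>T. bjoin L (insert a T)) F"
    and "bd (restriction L a) Fr num = bool_bd {x. covers_in L a x} (\<lambda>T. bjoin L (insert a T)) Fr num"
proof -
  have "bjoin (restriction L a) T = bjoin L (insert a T)" if "T \<subseteq> {x. covers_in L a x}" for T
    using that by (intro bjoin_restriction[OF lat a]) (auto simp: restriction_def covers_in_def)
  then show "chains (restriction L a) F = bool_chains {x. covers_in L a x} (\<lambda>T. bjoin L (insert a T)) F"
    and "bd (restriction L a) Fr num = bool_bd {x. covers_in L a x} (\<lambda>T. bjoin L (insert a T)) Fr num"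
    unfolding chains_eq_bool_chains bd_eq_bool_bd atoms_restriction[OF lat a]
    by (auto intro: bool_chains_cong bool_bd_cong)
qed

lemma absorbs_join:
  assumes lat: "lattice_on L" and a: "a \<in> L" and X: "X \<subseteq> L" and y: "y \<in> L"
    and le: "\<And>T. T \<subseteq> X \<Longrightarrow> x \<in> T \<Longrightarrow> y \<le> bjoin L (insert a T)"
  shows "absorbs X (\<lambda>T. bjoin L (insert a T)) y x"
  unfolding absorbs_def
proof (intro allI impI)
  fix T assume "T \<subseteq> X" "x \<in> T"
  then show "bjoin L (insert a (insert y T)) = bjoin L (insert a T)"
    using a X y le by (subst insert_commute) (intro bjoin_insert_absorb[OF lat], auto)
qed

context
  fixes L :: "'a::order set" and a :: 'a
  assumes geo: "geometric_lattice L" and a: "a \<in> atoms L"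
begin

lemma cover_absorbed_by_atom:
  assumes l: "covers_in L a l" and X: "X \<subseteq> L"
  shows "\<exists>b\<in>atoms L - {a}. absorbs X (\<lambda>T. bjoin L (insert a T)) b l"
proof -
  have lat: "lattice_on L" and aL: "a \<in> L" using geometric_lattice_on[OF geo a] a atoms_subset by auto
  obtain b where b: "b \<in> atoms L - {a}" "bjoin L {a, b} = l" using cover_eq_join_atom[OF geo a l] by blast
  have bL: "b \<in> L" using b atoms_subset by blast
  have "b \<le> l" using b aL bL by (auto intro: bjoin_upper[OF lat])
  have "absorbs X (\<lambda>T. bjoin L (insert a T)) b l"
  proof (rule absorbs_join[OF lat aL X bL])
    fix T assume "T \<subseteq> X" "l \<in> T"
    then have "l \<le> bjoin L (insert a T)" using X aL by (intro bjoin_upper[OF lat]) auto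
    then show "b \<le> bjoin L (insert a T)" using \<open>b \<le> l\<close> by simp
  qed
  then show ?thesis using b by blast
qed

lemma atom_absorbed_by_cover:
  assumes b: "b \<in> atoms L - {a}" and X: "X \<subseteq> L"
  shows "\<exists>l\<in>{x. covers_in L a x}. absorbs X (\<lambda>T. bjoin L (insert a T)) l b"
proof -
  have lat: "lattice_on L" and aL: "a \<in> L" using geometric_lattice_on[OF geo a] a atoms_subset by auto
  let ?l = "bjoin L {a, b}"
  have l: "covers_in L a ?l" "?l \<in> L" using join_atoms_covers[OF geo a] atom_below_join[OF geo a] b by auto
  have "absorbs X (\<lambda>T. bjoin L (insert a T)) ?l b"
  proof (rule absorbs_join[OF lat aL X l(2)])
    fix T assume "T \<subseteq> X" "b \<in> T"
    then have "insert a T \<subseteq> L" "b \<in> insert a T" using X aL by auto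
    then show "?l \<le> bjoin L (insert a T)"
      using aL by (intro bjoin_least[OF lat]) (auto intro: bjoin_upper[OF lat] bjoin_in[OF lat])
  qed
  then show ?thesis using l by blast
qed

lemma lin_iso_restriction_link:
  assumes md: "module scale" and sh: "sheaf_on scale L F Fr" and inj: "inj_on num L"
  defines "J \<equiv> \<lambda>T. bjoin L (insert a T)" and "R \<equiv> {x. covers_in L a x}" and "C \<equiv> atoms L - {a}"
  obtains \<theta> where "\<And>i. lin_iso scale
      (chain_complex.bnd (bool_chains R J F) (bool_bd R J Fr num) i)
      (chain_complex.homology (bool_chains R J F) (bool_bd R J Fr num) i)
      (chain_complex.bnd (bool_chains C J F) (bool_bd C J Fr num) i)
      (chain_complex.homology (bool_chains C J F) (bool_bd C J Fr num) i) (\<theta> i)"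
proof -
  have lat: "lattice_on L" using geometric_lattice_on[OF geo a] .
  have aL: "a \<in> L" and CL: "C \<subseteq> L" and RL: "R \<subseteq> L"
    using a atoms_subset by (auto simp: C_def R_def covers_in_def)
  have bc: "boolean_complex scale L F Fr num Y J" if "Y \<subseteq> L" for Y
    unfolding J_def using lat md sh inj that aL by (rule boolean_complex_join)
  interpret N: boolean_complex scale L F Fr num "C \<union> R" J by (rule bc) (use CL RL in blast)
  interpret R: boolean_complex scale L F Fr num R J by (rule bc[OF RL])
  interpret C: boolean_complex scale L F Fr num C J by (rule bc[OF CL])
  have NL: "C \<union> R \<subseteq> L" using CL RL by blast
  have "\<exists>y\<in>C. absorbs (C \<union> R) J y x" if "x \<in> R" for x
    using cover_absorbed_by_atom[OF _ NL] that by (simp add: J_def R_def C_def)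
  then have qi_C: "quasi_iso_incl C.Ch C.D N.Ch N.D"
    by (intro quasi_iso_incl_absorbed[OF N.boolean_complex_axioms]) auto
  have "\<exists>y\<in>R. absorbs (C \<union> R) J y x" if "x \<in> C" for x
    using atom_absorbed_by_cover[OF _ NL] that by (simp add: J_def R_def C_def)
  then have qi_R: "quasi_iso_incl R.Ch R.D N.Ch N.D"
    by (intro quasi_iso_incl_absorbed[OF N.boolean_complex_axioms]) auto
  show ?thesis
  proof (rule that)
    fix i
    show "lin_iso scale (R.bnd i) (R.homology i) (C.bnd i) (C.homology i)
      (inv_into (C.homology i) (induced_map (N.cls i) id) \<circ> induced_map (N.cls i) id)"
      using lin_iso_comp[OF lin_iso_induced_incl[OF R.chain_complex_axioms N.chain_complex_axioms qi_R]
          C.lin_iso_inv_into[OF lin_iso_induced_incl[OF C.chain_complex_axioms N.chain_complex_axioms qi_C]]] .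
  qed
qed

end

theorem theorem7:
  fixes L :: "'a::order set" and a :: 'a
    and scale :: "'r::comm_ring_1 \<Rightarrow> 'm::ab_group_add \<Rightarrow> 'm"
    and F :: "'a \<Rightarrow> 'm set" and Fr :: "'a \<Rightarrow> 'a \<Rightarrow> 'm \<Rightarrow> 'm"
    and num :: "'a \<Rightarrow> nat"
  assumes "geometric_lattice L"
    and "module scale"
    and "sheaf_on scale L F Fr"
    and "inj_on num L"
    and "a \<in> atoms L"
  shows "\<exists>\<alpha> \<beta> \<delta>. \<forall>i::int.
    hom_lin scale (boundaries (restriction L a) F Fr num i) (HC (restriction L a) F Fr num i)
                  (boundaries (deletion L a) F Fr num i) (HC (deletion L a) F Fr num i) (\<alpha> i) \<and>
    hom_lin scale (boundaries (deletion L a) F Fr num i) (HC (deletion L a) F Fr num i)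
                  (boundaries L F Fr num i) (HC L F Fr num i) (\<beta> i) \<and>
    hom_lin scale (boundaries L F Fr num i) (HC L F Fr num i)
                  (boundaries (restriction L a) F Fr num (i - 1)) (HC (restriction L a) F Fr num (i - 1)) (\<delta> i) \<and>
    exact_at (HC (restriction L a) F Fr num i) (\<alpha> i) (HC (deletion L a) F Fr num i) (\<beta> i)
             (boundaries L F Fr num i) \<and>
    exact_at (HC (deletion L a) F Fr num i) (\<beta> i) (HC L F Fr num i) (\<delta> i)
             (boundaries (restriction L a) F Fr num (i - 1)) \<and>
    exact_at (HC L F Fr num i) (\<delta> i) (HC (restriction L a) F Fr num (i - 1)) (\<alpha> (i - 1))
             (boundaries (deletion L a) F Fr num (i - 1))"
proof -
  have lat: "lattice_on L" and aL: "a \<in> L" and RL: "{x. covers_in L a x} \<subseteq> L"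
    using geometric_lattice_on[OF assms(1,5)] assms(5) atoms_subset by (auto simp: covers_in_def)
  interpret B: boolean_complex scale L F Fr num "atoms L" "bjoin L"
    using boolean_complex_atoms[OF lat assms(2-4)] .
  interpret S: short_exact scale
    "bool_chains (atoms L - {a}) (bjoin L) F" "bool_bd (atoms L - {a}) (bjoin L) Fr num"
    B.Ch B.D "bool_chains (atoms L - {a}) (\<lambda>T. bjoin L (insert a T)) F"
    "bool_bd (atoms L - {a}) (\<lambda>T. bjoin L (insert a T)) Fr num" "B.link_proj a" "B.link_lift a"
    using B.short_exact_link[OF assms(5)] .
  interpret R: boolean_complex scale L F Fr num "{x. covers_in L a x}" "\<lambda>T. bjoin L (insert a T)"
    using boolean_complex_join[OF lat assms(2-4) RL aL] .
  obtain \<theta> where "\<And>i. lin_iso scale (R.bnd i) (R.homology i) (S.C.bnd i) (S.C.homology i) (\<theta> i)"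
    using lin_iso_restriction_link[OF assms(1,5,2-4)] by blast
  from R.long_exact_transport[OF S.long_exact_sequence this]
  have "long_exact scale R.bnd R.homology S.A.bnd S.A.homology B.bnd B.homology
    (\<lambda>i. S.connecting i \<circ> \<theta> i) S.incl (\<lambda>i. inv_into (R.homology (i - 1)) (\<theta> (i - 1)) \<circ> S.proj i)" .
  moreover note boundaries_HC_eq[OF B.boolean_complex_axioms chains_eq_bool_chains bd_eq_bool_bd]
    boundaries_HC_eq[OF B.boolean_complex_subset[OF Diff_subset] chains_deletion[OF lat assms(5)]]
    boundaries_HC_eq[OF R.boolean_complex_axioms chains_restriction[OF lat aL]]
  ultimately show ?thesis unfolding long_exact_def by (intro exI) simp
qed

end
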